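(* Consider any sequences $\{(x_k,y_k,\gamma_k)\}_{k\ge0}$, $\{(\tilde x_k,u_k,\tilde\gamma_k)\}_{k\ge1}$ generated by the inexact symmetric proximal ADMM described in the context. Define, for every $k\ge1$, $$v_k=\Big(H+\tfrac{(\tau-\tau\theta+\theta)\beta}{\tau+\theta}B^*B\Big)(y_{k-1}-y_k)-\tfrac{\tau}{\tau+\theta}B^*(\gamma_{k-1}-\gamma_k),\qquad w_k=-\tfrac{\tau}{\tau+\theta}B(y_{k-1}-y_k)+\tfrac{1}{(\tau+\theta)\beta}(\gamma_{k-1}-\gamma_k).$$ Let $\sigma\in[\hat\sigma,1)$ be a scalar with $\varphi(\sigma)\ge0$, $\widehat\varphi(\sigma)\ge0$, $\widetilde\varphi(\sigma)>0$, $\overline\varphi(\sigma)\ge0$ (such $\sigma$ exists). Then for every $k\ge1$, $$u_k\in\partial f(\tilde x_k)-A^*\tilde\gamma_k,\qquad v_k\in\partial g(y_k)-B^*\tilde\gamma_k,\qquad w_k=A\tilde x_k+By_k-b,$$ and there exists $i\le k$ such that $$\max\{\|u_i\|,\|v_i\|,\|w_i\|\}\le\sqrt{\frac{2\lambda_M d_0\,\mathcal C_1}{k}},$$ where $\mathcal C_1=\Big[1+\sigma+\frac{8(1+\tau+\vartheta)\varphi(\sigma)}{(\tau+\theta)(1+\tau)\vartheta}\Big]\Big/(1-\sigma)$ and $\lambda_M$ is the largest eigenvalue of $M$.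
   Context: Let $f:\mathbb{R}^n\to(-\infty,\infty]$ and $g:\mathbb{R}^p\to(-\infty,\infty]$ be proper closed convex functions, $A\in\mathbb{R}^{m\times n}$, $B\in\mathbb{R}^{m\times p}$, $b\in\mathbb{R}^m$ (problem: $\min\{f(x)+g(y):Ax+By=b\}$). Standing assumption: there exists $(x^*,y^*,\gamma^* )$ solving the Lagrangian system $0\in\partial f(x)-A^*\gamma$, $0\in\partial g(y)-B^*\gamma$, $0=Ax+By-b$. Here $\partial$ is the subdifferential, $A^*$ the transpose, $\mathbb{S}^n_{++}$ ($\mathbb{S}^p_+$) the symmetric positive definite (semidefinite) matrices, and $\|z\|_Q=\sqrt{\langle Qz,z\rangle}$ for $Q$ positive semidefinite. Algorithm (inexact symmetric proximal ADMM): given $(x_0,y_0,\gamma_0)\in\mathbb{R}^n\times\mathbb{R}^p\times\mathbb{R}^m$, $\beta>0$, $\tilde\sigma,\hat\sigma\in[0,1)$, $G\in\mathbb{S}^n_{++}$, $H\in\mathbb{S}^p_+$, and $(\tau,\theta)\in\mathcal R_{\tilde\sigma}:=\{(\tau,\theta):\tau\in(-1,1-\tilde\sigma),\ \tau+\theta>0,\ (1-\tau^2)(2-\tau-\theta-\tilde\sigma)-(1-\theta)^2(1-\tau-\tilde\sigma)>0\}$. For $k=1,2,\dots$: compute $(\tilde x_k,u_k)$ with $u_k\in\partial f(\tilde x_k)-A^*\tilde\gamma_k$ and $\|\tilde x_k-x_{k-1}+G^{-1}u_k\|_G^2\le\frac{\tilde\sigma}{\beta}\|\tilde\gamma_k-\gamma_{k-1}\|^2+\hat\sigma\|\tilde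 x_k-x_{k-1}\|_G^2$, where $\tilde\gamma_k=\gamma_{k-1}-\beta(A\tilde x_k+By_{k-1}-b)$; set $\gamma_{k-1/2}=\gamma_{k-1}-\tau\beta(A\tilde x_k+By_{k-1}-b)$; let $y_k$ be an optimal solution of $\min_y\{g(y)-\langle\gamma_{k-1/2},By\rangle+\frac\beta2\|A\tilde x_k+By-b\|^2+\frac12\|y-y_{k-1}\|_H^2\}$; set $x_k=x_{k-1}-G^{-1}u_k$ and $\gamma_k=\gamma_{k-1/2}-\theta\beta(A\tilde x_k+By_k-b)$. Definitions: $T(x,y,\gamma)=(\partial f(x)-A^*\gamma,\ \partial g(y)-B^*\gamma,\ Ax+By-b)$; $M=\begin{bmatrix}G&0&0\\0&H+\frac{(\tau-\tau\theta+\theta)\beta}{\tau+\theta}B^*B&-\frac{\tau}{\tau+\theta}B^*\\0&-\frac{\tau}{\tau+\theta}B&\frac{1}{(\tau+\theta)\beta}I\end{bmatrix}$; $z_0=(x_0,y_0,\gamma_0)$; $d_0=\inf\{\|z^*-z_0\|_M^2: z^*\in T^{-1}(0)\}$; $\vartheta=\sqrt{(3-3\tau-2\tilde\sigma)(4-\tau-\theta-2\tilde\sigma)}-2(1-\tau-\tilde\sigma)$; and for $\sigma\in\mathbb{R}$: $\varphi(\sigma)=(1-\tau)(\sigma-1)+(1-\tau-\tilde\sigma)(\tau+\theta)$, $\widehat\varphi(\sigma)=(1-\tau)[(1+\theta)\sigma-1+\tau]-\tilde\sigma(\tau+\theta)$, $\widetilde\varphi(\sigma)=\sigma-(1-\tau-\theta)^2-\tilde\sigma(\tau+\theta)$,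 $\overline\varphi(\sigma)=[(1+\tau)\widehat\varphi(\sigma)-2\tau\varphi(\sigma)](1+\tau)\widetilde\varphi(\sigma)-(1-\theta)^2\varphi(\sigma)^2$. *)

theory Defs
  imports "HOL-Analysis.Analysis" "HOL-Library.Extended_Real"
begin

definition proper_fun :: "('a \<Rightarrow> ereal) \<Rightarrow> bool" where
  "proper_fun f \<longleftrightarrow> (\<forall>x. f x \<noteq> -\<infinity>) \<and> (\<exists>x. f x \<noteq> \<infinity>)"

definition epigraph_e :: "('a \<Rightarrow> ereal) \<Rightarrow> ('a \<times> real) set" where
  "epigraph_e f = {(x, t). f x \<le> ereal t}"

definition convex_fun :: "('a::real_vector \<Rightarrow> ereal) \<Rightarrow> bool" where
  "convex_fun f \<longleftrightarrow> convex (epigraph_e f)"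

definition closed_fun :: "('a::topological_space \<Rightarrow> ereal) \<Rightarrow> bool" where
  "closed_fun f \<longleftrightarrow> closed (epigraph_e f)"

definition subdiff :: "('a::real_inner \<Rightarrow> ereal) \<Rightarrow> 'a \<Rightarrow> 'a set" where
  "subdiff f x = {v. f x \<noteq> \<infinity> \<and> (\<forall>z. f x + ereal (inner v (z - x)) \<le> f z)}"

definition sym_mat :: "real^'n^'n \<Rightarrow> bool" where
  "sym_mat Q \<longleftrightarrow> transpose Q = Q"

definition pos_def :: "real^'n^'n \<Rightarrow> bool" where
  "pos_def Q \<longleftrightarrow> sym_mat Q \<and> (\<forall>z. z \<noteq> 0 \<longrightarrow> inner (Q *v z) z > 0)"

definition pos_semidef :: "real^'n^'n \<Rightarrow> bool" where
  "pos_semidef Q \<longleftrightarrow> sym_mat Q \<and> (\<forall>z. inner (Q *v z) z \<ge> 0)"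

definition qnorm2 :: "real^'n^'n \<Rightarrow> real^'n \<Rightarrow> real" where
  "qnorm2 Q z = inner (Q *v z) z"

definition region_R :: "real \<Rightarrow> real \<Rightarrow> real \<Rightarrow> bool" where
  "region_R st \<tau> \<theta> \<longleftrightarrow> -1 < \<tau> \<and> \<tau> < 1 - st \<and> \<tau> + \<theta> > 0 \<and>
     (1 - \<tau>\<^sup>2) * (2 - \<tau> - \<theta> - st) - (1 - \<theta>)\<^sup>2 * (1 - \<tau> - st) > 0"

definition kkt_set :: "(real^'n \<Rightarrow> ereal) \<Rightarrow> (real^'p \<Rightarrow> ereal) \<Rightarrow> real^'n^'m \<Rightarrow> real^'p^'m
   \<Rightarrow> real^'m \<Rightarrow> ((real^'n) \<times> (real^'p) \<times> (real^'m)) set" where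
  "kkt_set f g A B b = {(x, y, \<gamma>). transpose A *v \<gamma> \<in> subdiff f x \<and>
      transpose B *v \<gamma> \<in> subdiff g y \<and> A *v x + B *v y - b = 0}"

definition M_op :: "real^'n^'n \<Rightarrow> real^'p^'p \<Rightarrow> real^'p^'m \<Rightarrow> real \<Rightarrow> real \<Rightarrow> real
   \<Rightarrow> (real^'n) \<times> (real^'p) \<times> (real^'m) \<Rightarrow> (real^'n) \<times> (real^'p) \<times> (real^'m)" where
  "M_op G H B \<beta> \<tau> \<theta> = (\<lambda>(x, y, \<gamma>).
     (G *v x,
      (H + ((\<tau> - \<tau> * \<theta> + \<theta>) * \<beta> / (\<tau> + \<theta>)) *\<^sub>R (transpose B ** B)) *v y
        - (\<tau> / (\<tau> + \<theta>)) *\<^sub>R (transpose B *v \<gamma>),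
      - (\<tau> / (\<tau> + \<theta>)) *\<^sub>R (B *v y) + (1 / ((\<tau> + \<theta>) * \<beta>)) *\<^sub>R \<gamma>))"

definition largest_eigenvalue :: "('a::real_vector \<Rightarrow> 'a) \<Rightarrow> real" where
  "largest_eigenvalue L = Max {e. \<exists>z. z \<noteq> 0 \<and> L z = e *\<^sub>R z}"

definition d0_val :: "(real^'n \<Rightarrow> ereal) \<Rightarrow> (real^'p \<Rightarrow> ereal) \<Rightarrow> real^'n^'m \<Rightarrow> real^'p^'m
   \<Rightarrow> real^'m \<Rightarrow> real^'n^'n \<Rightarrow> real^'p^'p \<Rightarrow> real \<Rightarrow> real \<Rightarrow> real
   \<Rightarrow> (real^'n) \<times> (real^'p) \<times> (real^'m) \<Rightarrow> real" where
  "d0_val f g A B b G H \<beta> \<tau> \<theta> z0 =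
     Inf {inner (M_op G H B \<beta> \<tau> \<theta> (zs - z0)) (zs - z0) | zs. zs \<in> kkt_set f g A B b}"

definition vartheta :: "real \<Rightarrow> real \<Rightarrow> real \<Rightarrow> real" where
  "vartheta st \<tau> \<theta> = sqrt ((3 - 3 * \<tau> - 2* st) * (4 - \<tau> - \<theta> - 2* st)) - 2 * (1 - \<tau> - st)"

definition phi :: "real \<Rightarrow> real \<Rightarrow> real \<Rightarrow> real \<Rightarrow> real" where
  "phi st \<tau> \<theta> \<sigma> = (1 - \<tau>) * (\<sigma> - 1) + (1 - \<tau> - st) * (\<tau> + \<theta>)"

definition phi_hat :: "real \<Rightarrow> real \<Rightarrow> real \<Rightarrow> real \<Rightarrow> real" where
  "phi_hat st \<tau> \<theta> \<sigma> = (1 - \<tau>) * ((1 + \<theta>) * \<sigma> - 1 + \<tau>) - st * (\<tau> + \<theta>)"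

definition phi_tilde :: "real \<Rightarrow> real \<Rightarrow> real \<Rightarrow> real \<Rightarrow> real" where
  "phi_tilde st \<tau> \<theta> \<sigma> = \<sigma> - (1 - \<tau> - \<theta>)\<^sup>2 - st * (\<tau> + \<theta>)"

definition phi_bar :: "real \<Rightarrow> real \<Rightarrow> real \<Rightarrow> real \<Rightarrow> real" where
  "phi_bar st \<tau> \<theta> \<sigma> =
     ((1 + \<tau>) * phi_hat st \<tau> \<theta> \<sigma> - 2 * \<tau> * phi st \<tau> \<theta> \<sigma>) * (1 + \<tau>) * phi_tilde st \<tau> \<theta> \<sigma>
     - (1 - \<theta>)\<^sup>2 * (phi st \<tau> \<theta> \<sigma>)\<^sup>2"

definition C1_const :: "real \<Rightarrow> real \<Rightarrow> real \<Rightarrow> real \<Rightarrow> real" where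
  "C1_const st \<tau> \<theta> \<sigma> =
     (1 + \<sigma> + 8 * (1 + \<tau> + vartheta st \<tau> \<theta>) * phi st \<tau> \<theta> \<sigma>
        / ((\<tau> + \<theta>) * (1 + \<tau>) * vartheta st \<tau> \<theta>)) / (1 - \<sigma>)"

end

(* Write z_k = (x_k, y_k, gamma_k) and zt_k = (xt_k, y_k, gamma~_k).  The residual (u_k, v_k, w_k)
   equals M (z_{k-1} - z_k) and lies in T(zt_k), so monotonicity of T gives the hybrid proximal
   extragradient inequality
     |z* - z_k|_M^2 <= |z* - z_{k-1}|_M^2 + |zt_k - z_k|_M^2 - |zt_k - z_{k-1}|_M^2.
   The inexactness criterion bounds |zt_k - z_k|_M^2 by sigma |zt_k - z_{k-1}|_M^2 - Phi_k, where
   Phi_k is a quadratic form with coefficients phi_hat, phi, phi_tilde.  For k >= 2 monotonicity of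
   the subdifferential of g at y_k and y_{k-1} together with phi_bar(sigma) >= 0 gives
   -Phi_k <= eta_{k-1} - eta_k for a nonnegative potential eta; for k = 1, -Phi_1 is bounded by a
   multiple of |z* - z_0|_M^2.  Summing, the steps |z_{i-1} - z_i|_M^2, i <= k, add up to at most
   2 C_1 |z* - z_0|_M^2; the smallest one is at most the average, and |M a|^2 <= lambda_M |a|_M^2
   turns it into the residual bound. *)

theory Submission
  imports Defs
begin

section \<open>Quadratic forms of positive semidefinite operators\<close>

lemma nonneg_quadratic_discriminant_le:
  fixes a b c :: real
  assumes nonneg: "\<And>t. 0 \<le> a + 2 * t * b + t\<^sup>2 * c"
  shows "b\<^sup>2 \<le> a * c"
proof (cases "c = 0")
  case True
  have "b = 0"
  proof (rule ccontr)
    assume "b \<noteq> 0"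
    then have "a + 2 * (- (a + 1) / (2 * b)) * b + (- (a + 1) / (2 * b))\<^sup>2 * c = -1"
      using True by (simp add: field_simps)
    then show False using nonneg[of "- (a + 1) / (2 * b)"] by simp
  qed
  then show ?thesis using True by simp
next
  case False
  have "c > 0"
  proof (rule ccontr)
    assume "\<not> c > 0"
    with False have c: "c < 0" by simp
    define t where "t = sqrt ((\<bar>a\<bar> + 1) / - c)"
    have "t\<^sup>2 * c = - (\<bar>a\<bar> + 1)"
      using c unfolding t_def by (simp add: divide_nonneg_neg)
    then have "a + 2 * t * b + t\<^sup>2 * c < 0 \<or> a + 2 * (- t) * b + (- t)\<^sup>2 * c < 0"
      by auto
    then show False using nonneg by (meson not_le)
  qed
  have "0 \<le> a + 2 * (- b / c) * b + (- b / c)\<^sup>2 * c" by (rule nonneg)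
  also have "\<dots> = a - b\<^sup>2 / c" using \<open>c > 0\<close> by (simp add: field_simps power2_eq_square)
  finally show ?thesis using \<open>c > 0\<close> by (simp add: field_simps)
qed

locale psd_operator =
  fixes M :: "'a::real_inner \<Rightarrow> 'a"
  assumes linear: "linear M"
    and symmetric: "inner (M x) y = inner x (M y)"
    and nonneg: "0 \<le> inner (M x) x"
begin

lemma form_commute: "inner (M x) y = inner (M y) x"
  by (metis symmetric inner_commute)

lemma form_add: "inner (M (a + b)) (a + b) = inner (M a) a + 2 * inner (M a) b + inner (M b) b"
  using form_commute[of b a] linear by (simp add: linear_add inner_add_left inner_add_right)

lemma form_diff: "inner (M (a - b)) (a - b) = inner (M a) a - 2 * inner (M a) b + inner (M b) b"
  using form_add[of a "- b"] linear by (simp add: linear_neg)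

lemma form_diff_le: "inner (M (a - b)) (a - b) \<le> 2 * inner (M a) a + 2 * inner (M b) b"
  using form_add[of a b] form_diff[of a b] nonneg[of "a + b"] by linarith

lemma cauchy_schwarz: "(inner (M a) b)\<^sup>2 \<le> inner (M a) a * inner (M b) b"
proof (rule nonneg_quadratic_discriminant_le)
  fix t
  have "inner (M (a + t *\<^sub>R b)) (a + t *\<^sub>R b)
      = inner (M a) a + 2 * t * inner (M a) b + t\<^sup>2 * inner (M b) b"
    using form_add[of a "t *\<^sub>R b"] linear by (simp add: linear_scale power2_eq_square)
  then show "0 \<le> inner (M a) a + 2 * t * inner (M a) b + t\<^sup>2 * inner (M b) b"
    using nonneg by metis
qed

lemma form_three_point:
  "inner (M (c - z1)) (c - z1) = inner (M (c - z0)) (c - z0) + inner (M (zt - z1)) (zt - z1)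
     - inner (M (zt - z0)) (zt - z0) - 2 * inner (M (z0 - z1)) (zt - c)"
proof -
  define a e0 e1 where "a = c - zt" and "e0 = zt - z0" and "e1 = zt - z1"
  have "c - z1 = a + e1" "c - z0 = a + e0" "z0 - z1 = e1 - e0" "zt - c = - a"
    "zt - z1 = e1" "zt - z0 = e0"
    unfolding a_def e0_def e1_def by simp_all
  moreover have "inner (M (e1 - e0)) (- a) = inner (M a) e0 - inner (M a) e1"
    using linear form_commute[of e1 a] form_commute[of e0 a] by (simp add: linear_diff inner_diff_left)
  ultimately show ?thesis by (simp add: form_add)
qed

end

lemma finite_eigenvalues_of_symmetric:
  fixes M :: "'a::euclidean_space \<Rightarrow> 'a"
  assumes symmetric: "\<And>x y. inner (M x) y = inner x (M y)"
  shows "finite {e. \<exists>z. z \<noteq> 0 \<and> M z = e *\<^sub>R z}" (is "finite ?E")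
proof -
  define V where "V e = (SOME z. z \<noteq> 0 \<and> M z = e *\<^sub>R z)" for e
  have V: "V e \<noteq> 0 \<and> M (V e) = e *\<^sub>R V e" if "e \<in> ?E" for e
    using that unfolding V_def by (metis (mono_tags, lifting) mem_Collect_eq someI_ex)
  have inj: "inj_on V ?E"
    by (rule inj_onI) (metis V scaleR_cancel_right)
  have "pairwise orthogonal (V ` ?E)"
  proof (rule pairwiseI)
    fix a c assume a: "a \<in> V ` ?E" and c: "c \<in> V ` ?E" and "a \<noteq> c"
    obtain e1 e2 where e: "e1 \<in> ?E" "e2 \<in> ?E" and ac: "a = V e1" "c = V e2"
      using a c by (elim imageE)
    have "e1 * inner (V e1) (V e2) = e2 * inner (V e1) (V e2)"
      using symmetric[of "V e1" "V e2"] V[OF e(1)] V[OF e(2)] by simp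
    moreover have "e1 \<noteq> e2" using \<open>a \<noteq> c\<close> ac by auto
    ultimately show "orthogonal a c" unfolding orthogonal_def ac by simp
  qed
  moreover have "0 \<notin> V ` ?E"
  proof
    assume "0 \<in> V ` ?E"
    then obtain e where "e \<in> ?E" "0 = V e" by (rule imageE)
    then show False using V[of e] by simp
  qed
  ultimately have "finite (V ` ?E)"
    by (intro finiteI_independent pairwise_orthogonal_independent)
  then show ?thesis using inj by (rule finite_imageD)
qed

lemma rayleigh_maximizer_eigenvector:
  fixes M :: "'a::real_inner \<Rightarrow> 'a"
  assumes linear: "linear M" and symmetric: "\<And>x y. inner (M x) y = inner x (M y)"
    and bound: "\<And>w. inner (M w) w \<le> \<mu> * (norm w)\<^sup>2" and z: "norm z = 1" "inner (M z) z = \<mu>"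
  shows "M z = \<mu> *\<^sub>R z"
proof -
  define h where "h = M z - \<mu> *\<^sub>R z"
  have "0 \<le> 0 + 2 * t * (- inner h h) + t\<^sup>2 * (\<mu> * inner h h - inner (M h) h)" for t
  proof -
    have "0 \<le> \<mu> * (norm (z + t *\<^sub>R h))\<^sup>2 - inner (M (z + t *\<^sub>R h)) (z + t *\<^sub>R h)"
      using bound[of "z + t *\<^sub>R h"] by simp
    also have "\<dots> = (\<mu> * inner z z - inner (M z) z) + 2 * t * (\<mu> * inner z h - inner (M z) h)
        + t\<^sup>2 * (\<mu> * inner h h - inner (M h) h)"
      using linear symmetric[of h z] inner_commute[of h "M z"] inner_commute[of h z]
      unfolding power2_norm_eq_inner
      by (simp add: linear_add linear_scale inner_add_left inner_add_right power2_eq_square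
          algebra_simps)
    also have "\<mu> * inner z z - inner (M z) z = 0"
      using z by (simp add: power2_norm_eq_inner[symmetric])
    also have "\<mu> * inner z h - inner (M z) h = - inner h h"
      unfolding h_def by (simp add: inner_diff_left algebra_simps)
    finally show ?thesis by simp
  qed
  then have "(- inner h h)\<^sup>2 \<le> 0 * (\<mu> * inner h h - inner (M h) h)"
    by (rule nonneg_quadratic_discriminant_le)
  then show ?thesis unfolding h_def by simp
qed

lemma symmetric_rayleigh_max_eigenvalue:
  fixes M :: "'a::euclidean_space \<Rightarrow> 'a"
  assumes linear: "linear M" and symmetric: "\<And>x y. inner (M x) y = inner x (M y)"
  obtains \<mu> z where "z \<noteq> 0" "M z = \<mu> *\<^sub>R z" "\<And>w. inner (M w) w \<le> \<mu> * (norm w)\<^sup>2"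
proof -
  have "continuous_on (sphere 0 1) (\<lambda>w. inner (M w) w)"
    using linear by (intro continuous_intros linear_continuous_on) (simp add: linear_conv_bounded_linear)
  then obtain z where z: "norm z = 1"
    and z_max: "\<And>w. norm w = 1 \<Longrightarrow> inner (M w) w \<le> inner (M z) z"
    using continuous_attains_sup[OF compact_sphere, of 0 1] by fastforce
  have bound: "inner (M w) w \<le> inner (M z) z * (norm w)\<^sup>2" for w
  proof (cases "w = 0")
    case True
    then show ?thesis using linear by (simp add: linear_0)
  next
    case False
    then have "norm (w /\<^sub>R norm w) = 1" by simp
    then have "inner (M (w /\<^sub>R norm w)) (w /\<^sub>R norm w) \<le> inner (M z) z" by (rule z_max)
    then show ?thesis
      using False linear by (simp add: linear_scale field_simps power2_eq_square)
  qed
  moreover have "M z = inner (M z) z *\<^sub>R z"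
    using linear symmetric bound z by (rule rayleigh_maximizer_eigenvector) simp
  moreover have "z \<noteq> 0" using z by auto
  ultimately show ?thesis using that by blast
qed

(* largest_eigenvalue is a Max, so the eigenvalue set has to be shown finite and to contain the
   maximum of the Rayleigh quotient before it says anything. *)
theorem psd_operator_largest_eigenvalue:
  fixes M :: "'a::euclidean_space \<Rightarrow> 'a"
  assumes "psd_operator M"
  shows largest_eigenvalue_nonneg: "0 \<le> largest_eigenvalue M"
    and norm_sq_le_largest_eigenvalue: "(norm (M w))\<^sup>2 \<le> largest_eigenvalue M * inner (M w) w"
proof -
  interpret psd_operator M by fact
  obtain \<mu> z where z: "z \<noteq> 0" "M z = \<mu> *\<^sub>R z"
    and bound: "\<And>w. inner (M w) w \<le> \<mu> * (norm w)\<^sup>2"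
    using symmetric_rayleigh_max_eigenvalue[OF linear symmetric] by blast
  have \<mu>_le: "\<mu> \<le> largest_eigenvalue M"
    unfolding largest_eigenvalue_def using finite_eigenvalues_of_symmetric[OF symmetric] z
    by (auto intro!: Max_ge)
  have "0 \<le> \<mu> * inner z z" using nonneg[of z] z by simp
  then have "0 \<le> \<mu>" using z by (metis inner_gt_zero_iff zero_le_mult_iff not_le)
  then show "0 \<le> largest_eigenvalue M" using \<mu>_le by linarith
  have "(norm (M w))\<^sup>2 \<le> \<mu> * inner (M w) w"
  proof (cases "M w = 0")
    case True
    then show ?thesis by simp
  next
    case False
    have "(inner (M w) (M w))\<^sup>2 \<le> inner (M w) w * inner (M (M w)) (M w)"
      by (rule cauchy_schwarz)
    also have "\<dots> \<le> inner (M w) w * (\<mu> * inner (M w) (M w))"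
      using bound[of "M w"] nonneg[of w] by (simp add: power2_norm_eq_inner mult_left_mono)
    finally have "inner (M w) (M w) * inner (M w) (M w) \<le> (\<mu> * inner (M w) w) * inner (M w) (M w)"
      by (simp add: power2_eq_square algebra_simps)
    then show ?thesis using False by (simp add: power2_norm_eq_inner)
  qed
  also have "\<dots> \<le> largest_eigenvalue M * inner (M w) w"
    using \<mu>_le nonneg[of w] by (rule mult_right_mono)
  finally show "(norm (M w))\<^sup>2 \<le> largest_eigenvalue M * inner (M w) w" .
qed

lemma power2_norm_scaleR_add:
  fixes p q :: "'a::real_inner"
  shows "(norm (c1 *\<^sub>R p + c2 *\<^sub>R q))\<^sup>2 = c1\<^sup>2 * (norm p)\<^sup>2 + 2 * c1 * c2 * inner p q + c2\<^sup>2 * (norm q)\<^sup>2"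
  unfolding power2_norm_eq_inner
  by (simp add: inner_add_left inner_add_right inner_commute[of q p] power2_eq_square algebra_simps)

lemma power2_norm_le_sum:
  fixes p q :: "'a::real_inner"
  shows "(norm q)\<^sup>2 / 2 \<le> (norm p)\<^sup>2 + (norm (p + q))\<^sup>2"
proof -
  have "(norm p)\<^sup>2 + (norm (p + q))\<^sup>2 = (norm q)\<^sup>2 / 2 + (norm (2 *\<^sub>R p + q))\<^sup>2 / 2"
    unfolding power2_norm_eq_inner
    by (simp add: inner_add_left inner_add_right inner_commute[of q p] field_simps)
  then show ?thesis by simp
qed

lemma Max_norm_le_norm_triple: "Max {norm a, norm b, norm c} \<le> norm (a, b, c)"
  using norm_fst_le[of a "(b, c)"] norm_snd_le[of "(b, c)" a] norm_fst_le[of b c] norm_snd_le[of c b]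
  by simp

section \<open>Subgradients of extended-real functions\<close>

lemma proper_fun_finite_eq:
  assumes "proper_fun f" "f x \<noteq> \<infinity>"
  shows "f x = ereal (real_of_ereal (f x))"
  using assms unfolding proper_fun_def by (cases "f x") auto

lemma subdiff_monotone:
  assumes "proper_fun f" "v1 \<in> subdiff f x1" "v2 \<in> subdiff f x2"
  shows "0 \<le> inner (v1 - v2) (x1 - x2)"
proof -
  have "f x1 \<noteq> \<infinity>" "f x2 \<noteq> \<infinity>" using assms(2,3) unfolding subdiff_def by blast+
  then obtain a1 a2 where f: "f x1 = ereal a1" "f x2 = ereal a2"
    using proper_fun_finite_eq[OF assms(1)] by metis
  have "f x1 + ereal (inner v1 (x2 - x1)) \<le> f x2" "f x2 + ereal (inner v2 (x1 - x2)) \<le> f x1"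
    using assms(2,3) unfolding subdiff_def by blast+
  then have "a1 + inner v1 (x2 - x1) \<le> a2" "a2 + inner v2 (x1 - x2) \<le> a1"
    unfolding f by simp_all
  then show ?thesis by (simp add: inner_diff_left inner_diff_right)
qed

lemma convex_fun_segment_le:
  assumes "convex_fun g" "g y \<le> ereal a" "g z \<le> ereal c" "0 \<le> t" "t \<le> 1"
  shows "g (y + t *\<^sub>R (z - y)) \<le> ereal ((1 - t) * a + t * c)"
proof -
  have "(1 - t) *\<^sub>R (y, a) + t *\<^sub>R (z, c) \<in> epigraph_e g"
    using assms unfolding convex_fun_def by (intro convexD) (auto simp: epigraph_e_def)
  moreover have "(1 - t) *\<^sub>R (y, a) + t *\<^sub>R (z, c) = (y + t *\<^sub>R (z - y), (1 - t) * a + t * c)"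
    by (simp add: algebra_simps)
  ultimately show ?thesis unfolding epigraph_e_def by simp
qed

lemma nonpos_if_le_small_multiples:
  fixes X Q :: real
  assumes "\<And>t. 0 < t \<Longrightarrow> t \<le> 1 \<Longrightarrow> X \<le> t * Q"
  shows "X \<le> 0"
proof (rule ccontr)
  assume "\<not> X \<le> 0"
  moreover have "X \<le> Q" using assms[of 1] by simp
  ultimately have "X \<le> X / (2 * Q) * Q" by (intro assms) (auto simp: field_simps)
  with \<open>\<not> X \<le> 0\<close> \<open>X \<le> Q\<close> show False by (simp add: field_simps)
qed

lemma subdiff_at_minimizer:
  fixes g :: "'a::real_inner \<Rightarrow> ereal"
  assumes proper: "proper_fun g" and convex: "convex_fun g"
    and minimizer: "\<And>y'. g y + ereal (h y) \<le> g y' + ereal (h y')"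
    and expansion: "\<And>e t. h (y + t *\<^sub>R e) = h y + t * inner c e + t\<^sup>2 * Q e"
  shows "- c \<in> subdiff g y"
proof -
  \<comment> \<open>Compare \<open>y\<close> with \<open>y + t (z - y)\<close>: convexity of \<open>g\<close> and the expansion of \<open>h\<close> leave
    \<open>g y - g z - c \<bullet> (z - y) \<le> t Q (z - y)\<close>, and \<open>t \<rightarrow> 0\<close>.\<close>
  obtain y0 where "g y0 \<noteq> \<infinity>" using proper unfolding proper_fun_def by blast
  then obtain a0 where a0: "g y0 = ereal a0" using proper_fun_finite_eq[OF proper] by metis
  have "g y \<noteq> \<infinity>"
  proof
    assume "g y = \<infinity>"
    then show False using minimizer[of y0] a0 by simp
  qed
  then obtain a where a: "g y = ereal a" using proper_fun_finite_eq[OF proper] by metis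
  have "g y + ereal (inner (- c) (z - y)) \<le> g z" for z
  proof (cases "g z = \<infinity>")
    case True
    then show ?thesis by simp
  next
    case False
    then obtain a' where a': "g z = ereal a'" using proper_fun_finite_eq[OF proper] by metis
    have "a - a' - inner c (z - y) \<le> t * Q (z - y)" if t: "0 < t" "t \<le> 1" for t
    proof -
      have "ereal (a + h y) \<le> g (y + t *\<^sub>R (z - y)) + ereal (h (y + t *\<^sub>R (z - y)))"
        using minimizer[of "y + t *\<^sub>R (z - y)"] a by simp
      also have "\<dots> \<le> ereal ((1 - t) * a + t * a') + ereal (h (y + t *\<^sub>R (z - y)))"
        using convex_fun_segment_le[OF convex, of y a z a' t] a a' t by (intro add_right_mono) auto
      finally have "a + h y \<le> (1 - t) * a + t * a' + (h y + t * inner c (z - y) + t\<^sup>2 * Q (z - y))"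
        by (simp add: expansion)
      then have "t * (a - a' - inner c (z - y)) \<le> t * (t * Q (z - y))"
        by (simp add: algebra_simps power2_eq_square)
      then show ?thesis using t by simp
    qed
    then have "a - a' - inner c (z - y) \<le> 0" by (rule nonpos_if_le_small_multiples)
    then show ?thesis using a a' by (simp add: inner_minus_left)
  qed
  then show ?thesis unfolding subdiff_def using \<open>g y \<noteq> \<infinity>\<close> by blast
qed

section \<open>Matrices and the operator M\<close>

(* Keep transpose B *v _ as the adjoint of B *v _ rather than rewriting it to _ v* B. *)
declare transpose_matrix_vector [simp del]

lemma inner_transpose_mult: "inner (transpose B *v g) y = inner g (B *v y)"
  for B :: "real^'p^'m"
  by (simp add: dot_lmul_matrix transpose_matrix_vector)

lemma sym_mat_inner:
  assumes "sym_mat H"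
  shows "inner (H *v a) b = inner a (H *v b)"
  using inner_transpose_mult[of H a b] assms unfolding sym_mat_def by simp

lemma matrix_vector_mult_uminus: "A *v (- v) = - (A *v v)" for A :: "'a::ring_1^'n^'m"
  using matrix_vector_mult_diff_distrib[of A 0 v] by simp

lemma pos_semidef_psd_operator:
  assumes "pos_semidef H"
  shows "psd_operator ((*v) H)"
  using assms unfolding pos_semidef_def
  by (intro psd_operator.intro matrix_vector_mul_linear) (auto intro: sym_mat_inner)

lemma pos_def_imp_pos_semidef: "pos_def G \<Longrightarrow> pos_semidef G"
  unfolding pos_def_def pos_semidef_def by (metis inner_zero_right order.refl less_imp_le)

lemma pos_def_mult_matrix_inv:
  fixes G :: "real^'n^'n"
  assumes "pos_def G"
  shows "G *v (matrix_inv G *v v) = v"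
proof -
  have "\<forall>z. G *v z = 0 \<longrightarrow> z = 0"
    using assms unfolding pos_def_def by (metis inner_zero_left less_irrefl)
  then have "invertible G" by (simp add: invertible_left_inverse matrix_left_invertible_ker)
  then have "G ** matrix_inv G = mat 1"
    unfolding invertible_def matrix_inv_def by (rule someI_ex[THEN conjunct1])
  then show ?thesis by (simp add: matrix_vector_mul_assoc)
qed

lemma M_op_inner:
  "inner (M_op G H B \<beta> \<tau> \<theta> (\<xi>, \<eta>, \<zeta>)) (\<xi>', \<eta>', \<zeta>') =
     inner (G *v \<xi>) \<xi>' + inner (H *v \<eta>) \<eta>'
     + ((\<tau> - \<tau> * \<theta> + \<theta>) * \<beta> / (\<tau> + \<theta>)) * inner (B *v \<eta>) (B *v \<eta>')
     - (\<tau> / (\<tau> + \<theta>)) * inner \<zeta> (B *v \<eta>') - (\<tau> / (\<tau> + \<theta>)) * inner (B *v \<eta>) \<zeta>'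
     + (1 / ((\<tau> + \<theta>) * \<beta>)) * inner \<zeta> \<zeta>'"
proof -
  have "(H + ((\<tau> - \<tau> * \<theta> + \<theta>) * \<beta> / (\<tau> + \<theta>)) *\<^sub>R (transpose B ** B)) *v \<eta>
      = H *v \<eta> + ((\<tau> - \<tau> * \<theta> + \<theta>) * \<beta> / (\<tau> + \<theta>)) *\<^sub>R (transpose B *v (B *v \<eta>))"
    by (simp add: matrix_vector_mult_add_rdistrib scaleR_matrix_vector_assoc matrix_vector_mul_assoc)
  then show ?thesis
    unfolding M_op_def by (simp add: inner_add_left inner_diff_left inner_transpose_mult)
qed

lemma M_op_quadratic_form:
  assumes "\<tau> + \<theta> \<noteq> 0" "\<beta> \<noteq> 0"
  shows "inner (M_op G H B \<beta> \<tau> \<theta> (\<xi>, \<eta>, \<zeta>)) (\<xi>, \<eta>, \<zeta>) =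
     qnorm2 G \<xi> + qnorm2 H \<eta> + \<beta> * (1 - \<tau>) * (norm (B *v \<eta>))\<^sup>2
     + (norm (\<zeta> - (\<tau> * \<beta>) *\<^sub>R (B *v \<eta>)))\<^sup>2 / ((\<tau> + \<theta>) * \<beta>)"
proof -
  define BB ZB ZZ where "BB = inner (B *v \<eta>) (B *v \<eta>)" and "ZB = inner \<zeta> (B *v \<eta>)"
    and "ZZ = inner \<zeta> \<zeta>"
  have "(norm (\<zeta> - (\<tau> * \<beta>) *\<^sub>R (B *v \<eta>)))\<^sup>2 = ZZ - 2 * (\<tau> * \<beta>) * ZB + (\<tau> * \<beta>)\<^sup>2 * BB"
    unfolding BB_def ZB_def ZZ_def power2_norm_eq_inner
    by (simp add: inner_diff_left inner_diff_right inner_commute power2_eq_square algebra_simps)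
  moreover have "((\<tau> - \<tau> * \<theta> + \<theta>) * \<beta> / (\<tau> + \<theta>)) * BB - 2 * (\<tau> / (\<tau> + \<theta>)) * ZB
      + (1 / ((\<tau> + \<theta>) * \<beta>)) * ZZ
    = \<beta> * (1 - \<tau>) * BB + (ZZ - 2 * (\<tau> * \<beta>) * ZB + (\<tau> * \<beta>)\<^sup>2 * BB) / ((\<tau> + \<theta>) * \<beta>)"
  proof -
    define s where "s = \<tau> + \<theta>"
    have \<theta>: "\<theta> = s - \<tau>" and "s \<noteq> 0" using assms unfolding s_def by simp_all
    then show ?thesis unfolding s_def[symmetric] unfolding \<theta> using assms(2)
      by (simp add: field_simps power2_eq_square)
  qed
  moreover have "(norm (B *v \<eta>))\<^sup>2 = BB" unfolding BB_def by (simp add: power2_norm_eq_inner)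
  moreover have "inner (M_op G H B \<beta> \<tau> \<theta> (\<xi>, \<eta>, \<zeta>)) (\<xi>, \<eta>, \<zeta>) = qnorm2 G \<xi> + qnorm2 H \<eta>
      + (((\<tau> - \<tau> * \<theta> + \<theta>) * \<beta> / (\<tau> + \<theta>)) * BB - 2 * (\<tau> / (\<tau> + \<theta>)) * ZB
      + (1 / ((\<tau> + \<theta>) * \<beta>)) * ZZ)"
    unfolding M_op_inner qnorm2_def BB_def ZB_def ZZ_def
    by (simp add: inner_commute[of "B *v \<eta>" \<zeta>] algebra_simps)
  ultimately show ?thesis by (simp only: add.assoc)
qed

lemma psd_operator_M_op:
  fixes G :: "real^'n^'n" and H :: "real^'p^'p" and B :: "real^'p^'m"
  assumes G: "pos_semidef G" and H: "pos_semidef H" and "\<tau> < 1" "0 < \<tau> + \<theta>" "0 < \<beta>"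
  shows "psd_operator (M_op G H B \<beta> \<tau> \<theta>)"
proof (rule psd_operator.intro)
  show "linear (M_op G H B \<beta> \<tau> \<theta>)"
  proof (rule linearI)
    fix z z' :: "(real^'n) \<times> (real^'p) \<times> (real^'m)"
    show "M_op G H B \<beta> \<tau> \<theta> (z + z') = M_op G H B \<beta> \<tau> \<theta> z + M_op G H B \<beta> \<tau> \<theta> z'"
      by (cases z, cases z') (simp add: M_op_def matrix_vector_right_distrib algebra_simps)
  next
    fix r :: real and z :: "(real^'n) \<times> (real^'p) \<times> (real^'m)"
    show "M_op G H B \<beta> \<tau> \<theta> (r *\<^sub>R z) = r *\<^sub>R M_op G H B \<beta> \<tau> \<theta> z"
      by (cases z) (simp add: M_op_def matrix_vector_mult_scaleR algebra_simps)
  qed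
  show "inner (M_op G H B \<beta> \<tau> \<theta> z) z' = inner z (M_op G H B \<beta> \<tau> \<theta> z')" for z z'
  proof -
    obtain a b c a' b' c' where z: "z = (a, b, c)" "z' = (a', b', c')" by (cases z, cases z')
    have "sym_mat G" "sym_mat H" using G H unfolding pos_semidef_def by simp_all
    then have "inner a' (G *v a) = inner a (G *v a')" "inner b' (H *v b) = inner b (H *v b')"
      by (metis inner_commute sym_mat_inner)+
    then show ?thesis
      unfolding z inner_commute[of "(a, b, c)"] M_op_inner
      by (simp add: inner_commute algebra_simps)
  qed
  have "0 \<le> qnorm2 G \<xi>" "0 \<le> qnorm2 H \<eta>" for \<xi> \<eta>
    using G H unfolding pos_semidef_def qnorm2_def by simp_all
  then show "0 \<le> inner (M_op G H B \<beta> \<tau> \<theta> z) z" for z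
    using assms by (cases z) (simp add: M_op_quadratic_form)
qed

lemma prox_objective_expansion:
  fixes B :: "real^'p^'m" and H :: "real^'p^'p"
  assumes "sym_mat H"
  shows "- inner \<gamma> (B *v (y + t *\<^sub>R e)) + \<beta> / 2 * (norm (a + B *v (y + t *\<^sub>R e) - b))\<^sup>2
      + 1 / 2 * qnorm2 H (y + t *\<^sub>R e - y0)
    = (- inner \<gamma> (B *v y) + \<beta> / 2 * (norm (a + B *v y - b))\<^sup>2 + 1 / 2 * qnorm2 H (y - y0))
      + t * inner (- (transpose B *v \<gamma>) + \<beta> *\<^sub>R (transpose B *v (a + B *v y - b)) + H *v (y - y0)) e
      + t\<^sup>2 * (\<beta> / 2 * (norm (B *v e))\<^sup>2 + 1 / 2 * qnorm2 H e)"
proof -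
  define r d where "r = a + B *v y - b" and "d = y - y0"
  have "(norm (a + B *v (y + t *\<^sub>R e) - b))\<^sup>2 = (norm (r + t *\<^sub>R (B *v e)))\<^sup>2"
    unfolding r_def by (simp add: matrix_vector_right_distrib matrix_vector_mult_scaleR algebra_simps)
  also have "\<dots> = (norm r)\<^sup>2 + 2 * t * inner r (B *v e) + t\<^sup>2 * (norm (B *v e))\<^sup>2"
    unfolding power2_norm_eq_inner
    by (simp add: inner_add_left inner_add_right inner_commute power2_eq_square algebra_simps)
  finally have r: "(norm (a + B *v (y + t *\<^sub>R e) - b))\<^sup>2
      = (norm r)\<^sup>2 + 2 * t * inner r (B *v e) + t\<^sup>2 * (norm (B *v e))\<^sup>2" .
  have "y + t *\<^sub>R e - y0 = d + t *\<^sub>R e" unfolding d_def by (simp add: algebra_simps)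
  then have d: "qnorm2 H (y + t *\<^sub>R e - y0) = qnorm2 H d + 2 * t * inner (H *v d) e + t\<^sup>2 * qnorm2 H e"
    using sym_mat_inner[OF assms, of e d] unfolding qnorm2_def
    by (simp add: matrix_vector_right_distrib matrix_vector_mult_scaleR inner_add_left inner_add_right
        inner_commute[of e "H *v d"] power2_eq_square algebra_simps)
  have \<gamma>: "inner \<gamma> (B *v (y + t *\<^sub>R e)) = inner \<gamma> (B *v y) + t * inner (transpose B *v \<gamma>) e"
    by (simp add: matrix_vector_right_distrib matrix_vector_mult_scaleR inner_add_right
        inner_transpose_mult)
  have gradient: "inner (- (transpose B *v \<gamma>) + \<beta> *\<^sub>R (transpose B *v r) + H *v d) e
      = - inner (transpose B *v \<gamma>) e + \<beta> * inner r (B *v e) + inner (H *v d) e"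
    by (simp only: inner_add_left inner_minus_left inner_scaleR_left inner_transpose_mult)
  show ?thesis
    unfolding r d \<gamma> unfolding r_def[symmetric] d_def[symmetric] gradient
    by (simp add: algebra_simps)
qed

section \<open>Scalar estimates\<close>

lemma quadratic_form_nonneg_of_cauchy_schwarz:
  fixes X Y c PP PQ QQ :: real
  assumes "0 < X" "0 < Y" "0 \<le> c" "c \<le> sqrt (X * Y)" "0 \<le> PP" "0 \<le> QQ" "PQ\<^sup>2 \<le> PP * QQ"
  shows "0 \<le> X * PP + 2 * c * PQ + Y * QQ"
proof -
  have "0 \<le> (sqrt (X * PP) - sqrt (Y * QQ))\<^sup>2" by simp
  also have "\<dots> = X * PP + Y * QQ - 2 * sqrt (X * Y) * sqrt (PP * QQ)"
    using assms by (simp add: power2_diff real_sqrt_mult algebra_simps)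
  finally have "2 * sqrt (X * Y) * sqrt (PP * QQ) \<le> X * PP + Y * QQ" by simp
  moreover have "\<bar>PQ\<bar> \<le> sqrt (PP * QQ)" using assms(7) by (simp add: real_le_rsqrt)
  then have "c * \<bar>PQ\<bar> \<le> sqrt (X * Y) * sqrt (PP * QQ)"
    using assms(1-4) by (intro mult_mono) auto
  moreover have "c * - PQ \<le> c * \<bar>PQ\<bar>" using assms(3) by (intro mult_left_mono) auto
  ultimately show ?thesis by linarith
qed

lemma exists_le_average:
  fixes a :: "nat \<Rightarrow> real"
  assumes "1 \<le> k"
  shows "\<exists>i\<in>{1..k}. a i \<le> (\<Sum>j=1..k. a j) / k"
proof -
  define m where "m = Min (a ` {1..k})"
  have "m \<in> a ` {1..k}" unfolding m_def using assms by (intro Min_in) auto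
  then obtain i where i: "i \<in> {1..k}" "a i = m" by blast
  have "real k * m \<le> (\<Sum>j=1..k. a j)"
    using sum_bounded_below[of "{1..k}" m a] unfolding m_def by simp
  then show ?thesis using i assms by (intro bexI[of _ i]) (simp_all add: field_simps)
qed

(* Delta: distance to a solution, E and D: the errors |zt_i - z_i|_M^2 and |zt_i - z_{i-1}|_M^2,
   S: the steps |z_{i-1} - z_i|_M^2, eta: a nonnegative potential. *)
lemma hpe_telescoping_bound:
  fixes \<Delta> E D \<eta> S :: "nat \<Rightarrow> real"
  assumes distance: "\<And>i. 1 \<le> i \<Longrightarrow> \<Delta> i \<le> \<Delta> (i - 1) + E i - D i"
    and error: "\<And>i. 1 \<le> i \<Longrightarrow> E i \<le> \<sigma> * D i + \<eta> (i - 1) - \<eta> i"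
    and step: "\<And>i. 1 \<le> i \<Longrightarrow> S i \<le> 2 * E i + 2 * D i"
    and nonneg: "\<And>i. 0 \<le> \<Delta> i" "\<And>i. 0 \<le> \<eta> i" and \<sigma>: "0 \<le> \<sigma>" "\<sigma> < 1"
  shows "(\<Sum>i=1..k. S i) \<le> 2 * (1 + \<sigma>) * (\<Delta> 0 + \<eta> 0) / (1 - \<sigma>) + 2 * \<eta> 0"
proof -
  have sums: "\<Delta> k + \<eta> k + (1 - \<sigma>) * (\<Sum>i=1..k. D i) \<le> \<Delta> 0 + \<eta> 0 \<and>
      (\<Sum>i=1..k. S i) \<le> 2 * (1 + \<sigma>) * (\<Sum>i=1..k. D i) + 2 * \<eta> 0 - 2 * \<eta> k" for k
  proof (induction k)
    case 0
    then show ?case by simp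
  next
    case (Suc k)
    then show ?case
      using distance[of "Suc k"] error[of "Suc k"] step[of "Suc k"] by (simp add: algebra_simps)
  qed
  have "(\<Sum>i=1..k. D i) \<le> (\<Delta> 0 + \<eta> 0) / (1 - \<sigma>)"
    using sums[of k] nonneg[of k] \<sigma> by (simp add: field_simps)
  then have "2 * (1 + \<sigma>) * (\<Sum>i=1..k. D i) \<le> 2 * (1 + \<sigma>) * ((\<Delta> 0 + \<eta> 0) / (1 - \<sigma>))"
    using \<sigma> by (intro mult_left_mono) auto
  then show ?thesis using sums[of k] nonneg(2)[of k] by simp
qed

(* With a = 1 - tau - st, u = 1 - tau and e = theta - 1 the inequality defining region_R reads
   e^2 a < u (2 - u) (a - e), and the radicand of vartheta exceeds (2 a)^2 by
   4 a + u (2 - u) - e (2 a + u). *)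
lemma region_radicand_gap_pos:
  fixes a u e :: real
  assumes u: "0 < u" "u < 2" and a: "0 < a" and region: "e\<^sup>2 * a < u * (2 - u) * (a - e)"
  shows "e * (2 * a + u) < 4 * a + u * (2 - u)"
proof (cases "e \<le> 2 - u")
  case True
  then have "e * (2 * a + u) \<le> (2 - u) * (2 * a + u)" using u a by (intro mult_right_mono) auto
  also have "\<dots> < 4 * a + u * (2 - u)" using u a by (simp add: algebra_simps)
  finally show ?thesis .
next
  case False
  then have e: "0 < e" using u by simp
  have "0 \<le> e\<^sup>2 * a" using a by simp
  with region have "0 < u * (2 - u) * (a - e)" by linarith
  moreover have "0 < u * (2 - u)" using u by simp
  ultimately have ae: "0 < a - e" by (rule zero_less_mult_pos)
  have "e * (e * a) < e * (u * (a - e))"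
  proof -
    have "u * (2 - u) * (a - e) \<le> u * e * (a - e)"
      using False u ae by (intro mult_right_mono mult_left_mono) auto
    then show ?thesis using region by (simp add: power2_eq_square algebra_simps)
  qed
  then have "e * a < u * (a - e)" using e by simp
  moreover have "0 \<le> (2 - u) * (2 * a + u)" using u a by simp
  moreover have "0 < e * u" using e u by simp
  ultimately show ?thesis by (simp add: algebra_simps)
qed

lemma vartheta_pos:
  assumes "region_R st \<tau> \<theta>" "0 \<le> st"
  shows "0 < vartheta st \<tau> \<theta>"
proof -
  define a u e where "a = 1 - \<tau> - st" and "u = 1 - \<tau>" and "e = \<theta> - 1"
  have "0 < u" "u < 2" "0 < a" using assms unfolding region_R_def a_def u_def by auto
  moreover have "e\<^sup>2 * a < u * (2 - u) * (a - e)"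
    using assms(1) unfolding region_R_def a_def u_def e_def by (simp add: power2_eq_square algebra_simps)
  ultimately have "e * (2 * a + u) < 4 * a + u * (2 - u)" by (rule region_radicand_gap_pos)
  then have "(2 * (1 - \<tau> - st))\<^sup>2 < (3 - 3 * \<tau> - 2 * st) * (4 - \<tau> - \<theta> - 2 * st)"
    unfolding a_def u_def e_def by (simp add: power2_eq_square algebra_simps)
  then have "sqrt ((2 * (1 - \<tau> - st))\<^sup>2) < sqrt ((3 - 3 * \<tau> - 2 * st) * (4 - \<tau> - \<theta> - 2 * st))"
    by (rule real_sqrt_less_mono)
  then show ?thesis using \<open>0 < a\<close> unfolding vartheta_def a_def by simp
qed

(* The left-hand side is what the inexactness criterion leaves of
   sigma |zt_k - z_{k-1}|_M^2 - |zt_k - z_k|_M^2 besides the G- and H-terms, with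
   PP = |B (y_{k-1} - y_k)|^2, PQ = <B (y_{k-1} - y_k), A xt_k + B y_k - b>, QQ = |A xt_k + B y_k - b|^2;
   this identity is where phi, phi_hat and phi_tilde come from. *)
lemma phi_form_identity:
  fixes \<beta> \<tau> \<theta> st \<sigma> PP PQ QQ :: real
  assumes "0 < \<tau> + \<theta>"
  shows "\<sigma> * (\<beta> * (1 - \<tau>) * PP + \<beta> / (\<tau> + \<theta>) * ((1 - \<tau>)\<^sup>2 * PP + 2 * (1 - \<tau>) * PQ + QQ))
      - st * \<beta> * (PP + 2 * PQ + QQ)
      - \<beta> / (\<tau> + \<theta>) * ((1 - \<tau>)\<^sup>2 * PP - 2 * (1 - \<tau>) * (\<tau> + \<theta> - 1) * PQ + (\<tau> + \<theta> - 1)\<^sup>2 * QQ)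
    = \<beta> / (\<tau> + \<theta>) * (phi_hat st \<tau> \<theta> \<sigma> * PP + 2 * phi st \<tau> \<theta> \<sigma> * PQ + phi_tilde st \<tau> \<theta> \<sigma> * QQ)"
proof -
  define s where "s = \<tau> + \<theta>"
  have \<theta>: "\<theta> = s - \<tau>" and "0 < s" using assms unfolding s_def by simp_all
  then show ?thesis unfolding s_def[symmetric] phi_hat_def phi_def phi_tilde_def unfolding \<theta>
    by (simp add: field_simps power2_eq_square)
qed

lemma phi_form_at_one:
  fixes \<beta> \<tau> \<theta> st PP PQ QQ :: real
  assumes "0 < \<tau> + \<theta>"
  shows "\<beta> / (\<tau> + \<theta>) * (phi_hat st \<tau> \<theta> 1 * PP + 2 * phi st \<tau> \<theta> 1 * PQ + phi_tilde st \<tau> \<theta> 1 * QQ)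
    = \<beta> * (1 - \<tau> - st) * (PP + 2 * PQ + QQ) + \<beta> * (1 - \<theta>) * QQ"
proof -
  define s where "s = \<tau> + \<theta>"
  have \<theta>: "\<theta> = s - \<tau>" and "0 < s" using assms unfolding s_def by simp_all
  then show ?thesis unfolding s_def[symmetric] phi_hat_def phi_def phi_tilde_def unfolding \<theta>
    by (simp add: field_simps power2_eq_square)
qed

(* Used with w = 1 + tau: monotone is the monotonicity of the subdifferential of g at y_k and y_{k-1},
   and phi_bar >= 0 is what makes its combination with cross and square nonnegative. *)
lemma phi_form_lower_bound:
  fixes \<beta> s w \<tau> \<theta> \<sigma> \<phi> \<phi>h \<phi>t PP PQ QQ PQ' QQ' HH HH' HX :: real
  assumes pos: "0 < \<beta>" "0 < s" "0 < w" "0 \<le> \<phi>" "0 < \<phi>t" "0 \<le> \<sigma>" "0 \<le> PP" "0 \<le> HH"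
    and phi_bar: "0 \<le> (w * \<phi>h - 2 * \<tau> * \<phi>) * w * \<phi>t - (1 - \<theta>)\<^sup>2 * \<phi>\<^sup>2"
    and monotone: "0 \<le> w * \<beta> * PQ + \<tau> * \<beta> * PP - (1 - \<theta>) * \<beta> * PQ' - HH + HX"
    and cross: "2 * HX \<le> HH + HH'"
    and square: "0 \<le> ((1 - \<theta>) * \<phi> / w)\<^sup>2 * PP + 2 * ((1 - \<theta>) * \<phi> / w) * \<phi>t * PQ' + \<phi>t\<^sup>2 * QQ'"
  shows "\<beta> / s * \<phi>t * QQ + \<phi> / (s * w) * HH - (\<beta> / s * \<phi>t * QQ' + \<phi> / (s * w) * HH')
    \<le> \<beta> / s * (\<phi>h * PP + 2 * \<phi> * PQ + \<phi>t * QQ) + \<sigma> * HH"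
proof -
  define q where "q = (w * \<phi>h - 2 * \<tau> * \<phi>) * PP + 2 * (1 - \<theta>) * \<phi> * PQ' + w * \<phi>t * QQ'"
  have "w * \<phi>t * q = ((w * \<phi>h - 2 * \<tau> * \<phi>) * w * \<phi>t - (1 - \<theta>)\<^sup>2 * \<phi>\<^sup>2) * PP
      + w\<^sup>2 * (((1 - \<theta>) * \<phi> / w)\<^sup>2 * PP + 2 * ((1 - \<theta>) * \<phi> / w) * \<phi>t * PQ' + \<phi>t\<^sup>2 * QQ')"
    unfolding q_def using pos by (simp add: field_simps power2_eq_square)
  also have "0 \<le> \<dots>" using phi_bar square pos by simp
  finally have "0 \<le> q"
    using pos zero_le_mult_iff[of "w * \<phi>t" q] mult_pos_pos[of w \<phi>t] by linarith
  then have "0 \<le> 2 * \<phi> * (w * \<beta> * PQ + \<tau> * \<beta> * PP - (1 - \<theta>) * \<beta> * PQ' - HH + HX)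
      + \<phi> * (HH + HH' - 2 * HX) + \<beta> * q"
    using monotone cross pos by simp
  then have "\<phi> * (HH - HH') - \<beta> * w * \<phi>t * QQ' \<le> \<beta> * w * (\<phi>h * PP + 2 * \<phi> * PQ)"
    unfolding q_def by (simp add: algebra_simps)
  then have "(\<beta> * w * \<phi>t * QQ + \<phi> * (HH - HH') - \<beta> * w * \<phi>t * QQ') / (s * w)
      \<le> (\<beta> * w * (\<phi>h * PP + 2 * \<phi> * PQ) + \<beta> * w * \<phi>t * QQ) / (s * w)"
    using pos by (intro divide_right_mono) simp_all
  moreover have "\<beta> / s * \<phi>t * QQ + \<phi> / (s * w) * HH - (\<beta> / s * \<phi>t * QQ' + \<phi> / (s * w) * HH')
      = (\<beta> * w * \<phi>t * QQ + \<phi> * (HH - HH') - \<beta> * w * \<phi>t * QQ') / (s * w)"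
    "\<beta> / s * (\<phi>h * PP + 2 * \<phi> * PQ + \<phi>t * QQ)
      = (\<beta> * w * (\<phi>h * PP + 2 * \<phi> * PQ) + \<beta> * w * \<phi>t * QQ) / (s * w)"
    using pos by (simp_all add: field_simps)
  moreover have "0 \<le> \<sigma> * HH" using pos by simp
  ultimately show ?thesis by linarith
qed

lemma first_step_scalar_bound:
  fixes \<beta> \<tau> \<theta> st PP PQ QQ HH d d1 :: real
  assumes pos: "0 < \<beta>" "-1 < \<tau>" "0 \<le> st" "0 < 1 - \<tau> - st" "0 < vartheta st \<tau> \<theta>"
    and error: "d1 + HH + \<beta> * (1 - \<tau> - st) * (PP + 2 * PQ + QQ) + \<beta> * (1 - \<theta>) * QQ \<le> d"
    and distance: "\<beta> * ((1 - \<tau>) * PP + (\<tau> + \<theta>) * QQ) / 2 \<le> d + d1"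
    and nonneg: "0 \<le> HH" "0 \<le> PP" "0 \<le> QQ" and cauchy_schwarz: "PQ\<^sup>2 \<le> PP * QQ"
  shows "- 2 * \<beta> * (1 + \<tau>) * PQ + HH \<le> 4 * (1 + \<tau> + vartheta st \<tau> \<theta>) / vartheta st \<tau> \<theta> * d"
proof -
  define vth where "vth = vartheta st \<tau> \<theta>"
  have "0 < vth" using pos unfolding vth_def by simp
  define a X Y \<kappa> where "a = 1 - \<tau> - st" and "X = 3 - 3 * \<tau> - 2 * st"
    and "Y = 4 - \<tau> - \<theta> - 2 * st" and "\<kappa> = 4 * (1 + \<tau> + vth) / vth"
  have sqrt_XY: "sqrt (X * Y) = vth + 2 * a"
    unfolding vth_def vartheta_def X_def Y_def a_def by simp
  have "0 < X" unfolding X_def using pos by simp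
  moreover have "0 < sqrt (X * Y)" using sqrt_XY pos \<open>0 < vth\<close> unfolding a_def by simp
  then have "0 < X * Y" by simp
  ultimately have "0 < Y" by (simp add: zero_less_mult_iff)
  have "4 \<le> \<kappa>" "0 < \<kappa>" unfolding \<kappa>_def using pos \<open>0 < vth\<close> by (simp_all add: field_simps)
  \<comment> \<open>AM-GM with the weight \<open>2 a + 4 (1 + \<tau>) / \<kappa>\<close>, admissible because it is at most
    \<open>vth + 2 a = sqrt (X Y)\<close>.\<close>
  have "4 * (1 + \<tau>) / \<kappa> \<le> vth" unfolding \<kappa>_def using pos \<open>0 < vth\<close> by (simp add: field_simps)
  then have "0 \<le> X * PP + 2 * (2 * a + 4 * (1 + \<tau>) / \<kappa>) * PQ + Y * QQ"
    using \<open>0 < X\<close> \<open>0 < Y\<close> nonneg cauchy_schwarz pos \<open>0 < \<kappa>\<close> unfolding a_def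
    by (intro quadratic_form_nonneg_of_cauchy_schwarz) (simp_all add: sqrt_XY a_def)
  then have "0 \<le> \<kappa> / 4 * \<beta> * (X * PP + 2 * (2 * a + 4 * (1 + \<tau>) / \<kappa>) * PQ + Y * QQ)"
    using \<open>0 < \<kappa>\<close> pos by simp
  also have "\<dots> = \<kappa> / 2 * (\<beta> * ((1 - \<tau>) * PP + (\<tau> + \<theta>) * QQ) / 2
      + \<beta> * a * (PP + 2 * PQ + QQ) + \<beta> * (1 - \<theta>) * QQ) + 2 * \<beta> * (1 + \<tau>) * PQ"
    unfolding X_def Y_def a_def using \<open>0 < \<kappa>\<close> by (simp add: field_simps)
  also have "\<dots> \<le> \<kappa> / 2 * (2 * d - HH) + 2 * \<beta> * (1 + \<tau>) * PQ"
    using error distance \<open>0 < \<kappa>\<close> unfolding a_def by (intro add_right_mono mult_left_mono) auto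
  also have "\<dots> \<le> \<kappa> * d - HH + 2 * \<beta> * (1 + \<tau>) * PQ"
  proof -
    have "1 * HH \<le> \<kappa> / 2 * HH" using \<open>4 \<le> \<kappa>\<close> nonneg by (intro mult_right_mono) auto
    moreover have "\<kappa> / 2 * (2 * d - HH) = \<kappa> * d - \<kappa> / 2 * HH" by (simp add: algebra_simps)
    ultimately show ?thesis by linarith
  qed
  finally show ?thesis unfolding \<kappa>_def vth_def by simp
qed

section \<open>The iteration\<close>

(* xt, gamma_t and gamma_h are x~_k, gamma~_k and gamma_{k-1/2}; st and sh are sigma~ and sigma^. *)
locale inexact_sym_prox_admm =
  fixes f :: "real^'n \<Rightarrow> ereal" and g :: "real^'p \<Rightarrow> ereal"
    and A :: "real^'n^'m" and B :: "real^'p^'m" and b :: "real^'m"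
    and G :: "real^'n^'n" and H :: "real^'p^'p"
    and \<beta> st sh \<tau> \<theta> :: real
    and x :: "nat \<Rightarrow> real^'n" and y :: "nat \<Rightarrow> real^'p" and \<gamma> :: "nat \<Rightarrow> real^'m"
    and xt :: "nat \<Rightarrow> real^'n" and u :: "nat \<Rightarrow> real^'n" and \<gamma>t :: "nat \<Rightarrow> real^'m"
    and \<gamma>h :: "nat \<Rightarrow> real^'m"
    and v :: "nat \<Rightarrow> real^'p" and w :: "nat \<Rightarrow> real^'m"
  assumes f_proper: "proper_fun f"
    and g_proper: "proper_fun g" and g_convex: "convex_fun g"
    and \<beta>_pos: "0 < \<beta>" and st_nonneg: "0 \<le> st" and sh_nonneg: "0 \<le> sh"
    and G_pd: "pos_def G" and H_psd: "pos_semidef H"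
    and region: "region_R st \<tau> \<theta>"
    and step_gt: "\<And>k. k \<ge> 1 \<Longrightarrow> \<gamma>t k = \<gamma> (k - 1) - \<beta> *\<^sub>R (A *v xt k + B *v y (k - 1) - b)"
    and step_u: "\<And>k. k \<ge> 1 \<Longrightarrow> u k \<in> {s - transpose A *v \<gamma>t k | s. s \<in> subdiff f (xt k)}"
    and step_inexact: "\<And>k. k \<ge> 1 \<Longrightarrow>
        qnorm2 G (xt k - x (k - 1) + matrix_inv G *v u k)
          \<le> st / \<beta> * (norm (\<gamma>t k - \<gamma> (k - 1)))\<^sup>2 + sh * qnorm2 G (xt k - x (k - 1))"
    and step_gh: "\<And>k. k \<ge> 1 \<Longrightarrow> \<gamma>h k = \<gamma> (k - 1) - (\<tau> * \<beta>) *\<^sub>R (A *v xt k + B *v y (k - 1) - b)"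
    and step_y: "\<And>k y'. k \<ge> 1 \<Longrightarrow>
        g (y k) + ereal (- inner (\<gamma>h k) (B *v y k) + \<beta> / 2 * (norm (A *v xt k + B *v y k - b))\<^sup>2
                         + 1 / 2 * qnorm2 H (y k - y (k - 1)))
        \<le> g y' + ereal (- inner (\<gamma>h k) (B *v y') + \<beta> / 2 * (norm (A *v xt k + B *v y' - b))\<^sup>2
                         + 1 / 2 * qnorm2 H (y' - y (k - 1)))"
    and step_x: "\<And>k. k \<ge> 1 \<Longrightarrow> x k = x (k - 1) - matrix_inv G *v u k"
    and step_g: "\<And>k. k \<ge> 1 \<Longrightarrow> \<gamma> k = \<gamma>h k - (\<theta> * \<beta>) *\<^sub>R (A *v xt k + B *v y k - b)"
    and v_def: "\<And>k. k \<ge> 1 \<Longrightarrow> v k =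
        (H + ((\<tau> - \<tau> * \<theta> + \<theta>) * \<beta> / (\<tau> + \<theta>)) *\<^sub>R (transpose B ** B)) *v (y (k - 1) - y k)
        - (\<tau> / (\<tau> + \<theta>)) *\<^sub>R (transpose B *v (\<gamma> (k - 1) - \<gamma> k))"
    and w_def: "\<And>k. k \<ge> 1 \<Longrightarrow> w k =
        - (\<tau> / (\<tau> + \<theta>)) *\<^sub>R (B *v (y (k - 1) - y k)) + (1 / ((\<tau> + \<theta>) * \<beta>)) *\<^sub>R (\<gamma> (k - 1) - \<gamma> k)"
begin

abbreviation "M \<equiv> M_op G H B \<beta> \<tau> \<theta>"

abbreviation "Mnorm2 a \<equiv> inner (M a) a"

lemma parameter_bounds: "-1 < \<tau>" "\<tau> < 1 - st" "0 < \<tau> + \<theta>"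
  using region unfolding region_R_def by auto

sublocale M: psd_operator M
  by (rule psd_operator_M_op[OF pos_def_imp_pos_semidef[OF G_pd] H_psd])
    (use parameter_bounds st_nonneg \<beta>_pos in auto)

sublocale Hop: psd_operator "(*v) H"
  by (rule pos_semidef_psd_operator[OF H_psd])

lemma qnorm2_nonneg: "0 \<le> qnorm2 G a" "0 \<le> qnorm2 H c"
  using pos_def_imp_pos_semidef[OF G_pd] H_psd unfolding pos_semidef_def qnorm2_def by simp_all

definition dy :: "nat \<Rightarrow> real^'p" where "dy k = y (k - 1) - y k"

definition feas :: "nat \<Rightarrow> real^'m" where "feas k = A *v xt k + B *v y k - b"

definition z_seq :: "nat \<Rightarrow> (real^'n) \<times> (real^'p) \<times> (real^'m)" where
  "z_seq k = (x k, y k, \<gamma> k)"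

definition zt_seq :: "nat \<Rightarrow> (real^'n) \<times> (real^'p) \<times> (real^'m)" where
  "zt_seq k = (xt k, y k, \<gamma>t k)"

definition y_subgrad :: "nat \<Rightarrow> real^'p" where
  "y_subgrad k = transpose B *v \<gamma>h k - \<beta> *\<^sub>R (transpose B *v feas k) + H *v dy k"

lemma multiplier_steps:
  assumes "1 \<le> k"
  shows "\<gamma>t k = \<gamma> (k - 1) - \<beta> *\<^sub>R (B *v dy k + feas k)"
    and "\<gamma>h k = \<gamma> (k - 1) - (\<tau> * \<beta>) *\<^sub>R (B *v dy k + feas k)"
    and "\<gamma> (k - 1) - \<gamma> k = (\<tau> * \<beta>) *\<^sub>R (B *v dy k) + ((\<tau> + \<theta>) * \<beta>) *\<^sub>R feas k"
proof -
  have residual: "A *v xt k + B *v y (k - 1) - b = B *v dy k + feas k"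
    unfolding dy_def feas_def by (simp add: matrix_vector_mult_diff_distrib algebra_simps)
  show "\<gamma>t k = \<gamma> (k - 1) - \<beta> *\<^sub>R (B *v dy k + feas k)"
    using step_gt[OF assms] residual by simp
  show \<gamma>h: "\<gamma>h k = \<gamma> (k - 1) - (\<tau> * \<beta>) *\<^sub>R (B *v dy k + feas k)"
    using step_gh[OF assms] residual by simp
  have \<gamma>: "\<gamma> k = \<gamma>h k - (\<theta> * \<beta>) *\<^sub>R feas k" using step_g[OF assms] unfolding feas_def .
  show "\<gamma> (k - 1) - \<gamma> k = (\<tau> * \<beta>) *\<^sub>R (B *v dy k) + ((\<tau> + \<theta>) * \<beta>) *\<^sub>R feas k"
    unfolding \<gamma> \<gamma>h by (simp add: algebra_simps scaleR_add_left)
qed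

lemma w_eq_feas:
  assumes "1 \<le> k"
  shows "w k = feas k"
proof -
  have "w k = (1 / ((\<tau> + \<theta>) * \<beta>) * (\<tau> * \<beta>) - \<tau> / (\<tau> + \<theta>)) *\<^sub>R (B *v dy k)
      + (1 / ((\<tau> + \<theta>) * \<beta>) * ((\<tau> + \<theta>) * \<beta>)) *\<^sub>R feas k"
    using w_def[OF assms] multiplier_steps(3)[OF assms] unfolding dy_def[symmetric]
    by (simp add: scaleR_add_right scaleR_diff_left)
  then show ?thesis using parameter_bounds \<beta>_pos by simp
qed

lemma y_subgrad_in_subdiff:
  assumes "1 \<le> k"
  shows "y_subgrad k \<in> subdiff g (y k)"
proof -
  have "- (- (transpose B *v \<gamma>h k) + \<beta> *\<^sub>R (transpose B *v (A *v xt k + B *v y k - b))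
      + H *v (y k - y (k - 1))) \<in> subdiff g (y k)"
  proof (rule subdiff_at_minimizer[OF g_proper g_convex])
    show "g (y k) + ereal (- inner (\<gamma>h k) (B *v y k) + \<beta> / 2 * (norm (A *v xt k + B *v y k - b))\<^sup>2
        + 1 / 2 * qnorm2 H (y k - y (k - 1)))
      \<le> g y' + ereal (- inner (\<gamma>h k) (B *v y') + \<beta> / 2 * (norm (A *v xt k + B *v y' - b))\<^sup>2
        + 1 / 2 * qnorm2 H (y' - y (k - 1)))" for y'
      by (rule step_y[OF assms])
    show "- inner (\<gamma>h k) (B *v (y k + t *\<^sub>R e)) + \<beta> / 2 * (norm (A *v xt k + B *v (y k + t *\<^sub>R e) - b))\<^sup>2
        + 1 / 2 * qnorm2 H (y k + t *\<^sub>R e - y (k - 1))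
      = (- inner (\<gamma>h k) (B *v y k) + \<beta> / 2 * (norm (A *v xt k + B *v y k - b))\<^sup>2
        + 1 / 2 * qnorm2 H (y k - y (k - 1)))
        + t * inner (- (transpose B *v \<gamma>h k) + \<beta> *\<^sub>R (transpose B *v (A *v xt k + B *v y k - b))
          + H *v (y k - y (k - 1))) e
        + t\<^sup>2 * (\<beta> / 2 * (norm (B *v e))\<^sup>2 + 1 / 2 * qnorm2 H e)" for e t
      using H_psd unfolding pos_semidef_def by (intro prox_objective_expansion) simp
  qed
  moreover have "- (- (transpose B *v \<gamma>h k) + \<beta> *\<^sub>R (transpose B *v (A *v xt k + B *v y k - b))
      + H *v (y k - y (k - 1))) = y_subgrad k"
    unfolding y_subgrad_def dy_def feas_def[symmetric]
    by (simp add: matrix_vector_mult_diff_distrib algebra_simps)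
  ultimately show ?thesis by simp
qed

lemma v_eq_y_subgrad:
  assumes "1 \<le> k"
  shows "v k = y_subgrad k - transpose B *v \<gamma>t k"
proof -
  define c where "c = (\<tau> - \<tau> * \<theta> + \<theta>) * \<beta> / (\<tau> + \<theta>)"
  have coefficients: "c - \<tau> / (\<tau> + \<theta>) * (\<tau> * \<beta>) = (1 - \<tau>) * \<beta>"
    "\<tau> / (\<tau> + \<theta>) * ((\<tau> + \<theta>) * \<beta>) = \<tau> * \<beta>"
  proof -
    define s where "s = \<tau> + \<theta>"
    have \<theta>: "\<theta> = s - \<tau>" and "0 < s" using parameter_bounds unfolding s_def by simp_all
    then show "c - \<tau> / (\<tau> + \<theta>) * (\<tau> * \<beta>) = (1 - \<tau>) * \<beta>"
      "\<tau> / (\<tau> + \<theta>) * ((\<tau> + \<theta>) * \<beta>) = \<tau> * \<beta>"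
      unfolding c_def s_def[symmetric] unfolding \<theta> by (simp_all add: field_simps)
  qed
  have "(H + c *\<^sub>R (transpose B ** B)) *v dy k = H *v dy k + c *\<^sub>R (transpose B *v (B *v dy k))"
    by (simp add: matrix_vector_mult_add_rdistrib scaleR_matrix_vector_assoc matrix_vector_mul_assoc)
  moreover have "transpose B *v (\<gamma> (k - 1) - \<gamma> k)
      = (\<tau> * \<beta>) *\<^sub>R (transpose B *v (B *v dy k)) + ((\<tau> + \<theta>) * \<beta>) *\<^sub>R (transpose B *v feas k)"
    unfolding multiplier_steps(3)[OF assms] by (simp add: matrix_vector_right_distrib matrix_vector_mult_scaleR)
  ultimately have "v k = H *v dy k + (c - \<tau> / (\<tau> + \<theta>) * (\<tau> * \<beta>)) *\<^sub>R (transpose B *v (B *v dy k))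
      - (\<tau> / (\<tau> + \<theta>) * ((\<tau> + \<theta>) * \<beta>)) *\<^sub>R (transpose B *v feas k)"
    using v_def[OF assms] unfolding dy_def[symmetric] c_def[symmetric]
    by (simp add: scaleR_add_right scaleR_diff_left algebra_simps)
  also have "\<dots> = H *v dy k + ((1 - \<tau>) * \<beta>) *\<^sub>R (transpose B *v (B *v dy k))
      - (\<tau> * \<beta>) *\<^sub>R (transpose B *v feas k)"
    unfolding coefficients ..
  also have "\<dots> = y_subgrad k - transpose B *v \<gamma>t k"
    unfolding y_subgrad_def multiplier_steps(1,2)[OF assms]
    by (simp add: matrix_vector_right_distrib matrix_vector_mult_diff_distrib matrix_vector_mult_scaleR
        algebra_simps)
  finally show ?thesis .
qed

lemma residual_eq_M:
  assumes "1 \<le> k"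
  shows "(u k, v k, w k) = M (z_seq (k - 1) - z_seq k)"
  using step_x[OF assms] pos_def_mult_matrix_inv[OF G_pd] v_def[OF assms] w_def[OF assms]
  unfolding z_seq_def M_op_def by simp

lemma residual_inclusions:
  assumes "1 \<le> k"
  shows "u k \<in> {s - transpose A *v \<gamma>t k | s. s \<in> subdiff f (xt k)}"
    and "v k \<in> {s - transpose B *v \<gamma>t k | s. s \<in> subdiff g (y k)}"
    and "w k = A *v xt k + B *v y k - b"
  using step_u[OF assms] v_eq_y_subgrad[OF assms] y_subgrad_in_subdiff[OF assms] w_eq_feas[OF assms]
  unfolding feas_def by blast+

lemma residual_monotone:
  assumes kkt: "zs \<in> kkt_set f g A B b" and "1 \<le> k"
  shows "0 \<le> inner (M (z_seq (k - 1) - z_seq k)) (zt_seq k - zs)"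
proof -
  obtain xs ys gs where zs: "zs = (xs, ys, gs)" by (cases zs)
  have kkt': "transpose A *v gs \<in> subdiff f xs" "transpose B *v gs \<in> subdiff g ys"
    "b = A *v xs + B *v ys"
    using kkt unfolding zs kkt_set_def by (simp_all add: algebra_simps)
  have "0 \<le> inner ((u k + transpose A *v \<gamma>t k) - transpose A *v gs) (xt k - xs)"
    by (rule subdiff_monotone[OF f_proper _ kkt'(1)]) (use step_u[OF \<open>1 \<le> k\<close>] in auto)
  then have "0 \<le> inner (u k) (xt k - xs) + inner (\<gamma>t k - gs) (A *v xt k - A *v xs)"
    by (simp add: inner_add_left inner_diff_left inner_diff_right inner_transpose_mult)
  moreover have "0 \<le> inner (v k) (y k - ys) + inner (\<gamma>t k - gs) (B *v y k - B *v ys)"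
    using subdiff_monotone[OF g_proper y_subgrad_in_subdiff[OF \<open>1 \<le> k\<close>] kkt'(2)]
      v_eq_y_subgrad[OF \<open>1 \<le> k\<close>]
    by (simp add: inner_add_left inner_diff_left inner_diff_right inner_transpose_mult)
  moreover have "inner (w k) (\<gamma>t k - gs)
      = inner (\<gamma>t k - gs) (A *v xt k - A *v xs) + inner (\<gamma>t k - gs) (B *v y k - B *v ys)"
    unfolding w_eq_feas[OF \<open>1 \<le> k\<close>] feas_def unfolding kkt'(3)
    by (simp add: inner_commute inner_diff_right algebra_simps)
  ultimately show ?thesis
    unfolding residual_eq_M[OF \<open>1 \<le> k\<close>, symmetric] zt_seq_def zs by simp
qed

lemma kkt_distance_step:
  assumes "zs \<in> kkt_set f g A B b" "1 \<le> k"
  shows "Mnorm2 (zs - z_seq k) \<le> Mnorm2 (zs - z_seq (k - 1)) + Mnorm2 (zt_seq k - z_seq k)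
    - Mnorm2 (zt_seq k - z_seq (k - 1))"
  using M.form_three_point[of zs "z_seq k" "z_seq (k - 1)" "zt_seq k"] residual_monotone[OF assms]
  by simp

lemma parameter_nonzero: "\<tau> + \<theta> \<noteq> 0" "\<beta> \<noteq> 0"
  using parameter_bounds \<beta>_pos by auto

lemmas Mnorm2_triple = M_op_quadratic_form[OF parameter_nonzero]

lemma Mnorm2_lower_bound:
  "\<beta> * (1 - \<tau>) * (norm (B *v \<eta>))\<^sup>2 + (norm (\<zeta> - (\<tau> * \<beta>) *\<^sub>R (B *v \<eta>)))\<^sup>2 / ((\<tau> + \<theta>) * \<beta>)
    \<le> Mnorm2 (\<xi>, \<eta>, \<zeta>)"
  using qnorm2_nonneg(1)[of \<xi>] qnorm2_nonneg(2)[of \<eta>] unfolding Mnorm2_triple by linarith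

lemma norm_scaleR_\<beta>_sq_div: "(norm (\<beta> *\<^sub>R a))\<^sup>2 / ((\<tau> + \<theta>) * \<beta>) = \<beta> / (\<tau> + \<theta>) * (norm a)\<^sup>2"
proof -
  have "(norm (\<beta> *\<^sub>R a))\<^sup>2 = \<beta> * (\<beta> * (norm a)\<^sup>2)" by (simp add: power_mult_distrib power2_eq_square)
  then show ?thesis using parameter_nonzero by simp
qed

lemma Mnorm2_zt_minus_z:
  assumes "1 \<le> k"
  shows "Mnorm2 (zt_seq k - z_seq k) = qnorm2 G (xt k - x k)
      + \<beta> / (\<tau> + \<theta>) * ((1 - \<tau>)\<^sup>2 * (norm (B *v dy k))\<^sup>2
        - 2 * (1 - \<tau>) * (\<tau> + \<theta> - 1) * inner (B *v dy k) (feas k) + (\<tau> + \<theta> - 1)\<^sup>2 * (norm (feas k))\<^sup>2)"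
proof -
  define p q where "p = B *v dy k" and "q = feas k"
  have \<gamma>_diff: "\<gamma>t k - \<gamma> k = \<beta> *\<^sub>R ((- (1 - \<tau>)) *\<^sub>R p + (\<tau> + \<theta> - 1) *\<^sub>R q)"
    using multiplier_steps(1,3)[OF assms] unfolding p_def[symmetric] q_def[symmetric]
    by (simp add: algebra_simps scaleR_add_left)
  have "(norm (\<gamma>t k - \<gamma> k))\<^sup>2 / ((\<tau> + \<theta>) * \<beta>) = \<beta> / (\<tau> + \<theta>) * ((1 - \<tau>)\<^sup>2 * (norm p)\<^sup>2
        - 2 * (1 - \<tau>) * (\<tau> + \<theta> - 1) * inner p q + (\<tau> + \<theta> - 1)\<^sup>2 * (norm q)\<^sup>2)"
    unfolding \<gamma>_diff norm_scaleR_\<beta>_sq_div power2_norm_scaleR_add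
    by (simp add: algebra_simps power2_commute)
  then show ?thesis
    unfolding zt_seq_def z_seq_def p_def q_def by (simp add: Mnorm2_triple qnorm2_def)
qed

lemma Mnorm2_zt_minus_z_prev:
  assumes "1 \<le> k"
  shows "Mnorm2 (zt_seq k - z_seq (k - 1)) = qnorm2 G (xt k - x (k - 1)) + qnorm2 H (dy k)
      + (\<beta> * (1 - \<tau>) * (norm (B *v dy k))\<^sup>2
        + \<beta> / (\<tau> + \<theta>) * ((1 - \<tau>)\<^sup>2 * (norm (B *v dy k))\<^sup>2
          + 2 * (1 - \<tau>) * inner (B *v dy k) (feas k) + (norm (feas k))\<^sup>2))"
proof -
  define p q where "p = B *v dy k" and "q = feas k"
  have y_diff: "y k - y (k - 1) = - dy k" unfolding dy_def by simp
  have \<gamma>_diff: "\<gamma>t k - \<gamma> (k - 1) - (\<tau> * \<beta>) *\<^sub>R (B *v (y k - y (k - 1)))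
      = \<beta> *\<^sub>R ((- (1 - \<tau>)) *\<^sub>R p + (- 1) *\<^sub>R q)"
    unfolding y_diff matrix_vector_mult_uminus multiplier_steps(1)[OF assms]
      p_def[symmetric] q_def[symmetric]
    by (simp add: algebra_simps scaleR_add_left)
  have "(norm (\<gamma>t k - \<gamma> (k - 1) - (\<tau> * \<beta>) *\<^sub>R (B *v (y k - y (k - 1)))))\<^sup>2 / ((\<tau> + \<theta>) * \<beta>)
      = \<beta> / (\<tau> + \<theta>) * ((1 - \<tau>)\<^sup>2 * (norm p)\<^sup>2 + 2 * (1 - \<tau>) * inner p q + (norm q)\<^sup>2)"
    unfolding \<gamma>_diff norm_scaleR_\<beta>_sq_div power2_norm_scaleR_add by (simp add: algebra_simps power2_commute)
  then show ?thesis
    unfolding zt_seq_def z_seq_def p_def q_def using y_diff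
    by (simp add: Mnorm2_triple qnorm2_def matrix_vector_mult_uminus)
qed

lemma inexact_error_bound:
  assumes "1 \<le> k" "sh \<le> \<sigma>"
  shows "Mnorm2 (zt_seq k - z_seq k) \<le> \<sigma> * Mnorm2 (zt_seq k - z_seq (k - 1))
    - \<beta> / (\<tau> + \<theta>) * (phi_hat st \<tau> \<theta> \<sigma> * (norm (B *v dy k))\<^sup>2
      + 2 * phi st \<tau> \<theta> \<sigma> * inner (B *v dy k) (feas k) + phi_tilde st \<tau> \<theta> \<sigma> * (norm (feas k))\<^sup>2)
    - \<sigma> * qnorm2 H (dy k)"
proof -
  define PP PQ QQ where "PP = (norm (B *v dy k))\<^sup>2" and "PQ = inner (B *v dy k) (feas k)"
    and "QQ = (norm (feas k))\<^sup>2"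
  have \<gamma>t_diff: "\<gamma>t k - \<gamma> (k - 1) = (- \<beta>) *\<^sub>R (B *v dy k) + (- \<beta>) *\<^sub>R feas k"
    unfolding multiplier_steps(1)[OF assms(1)] by (simp add: scaleR_add_right)
  have "(norm (\<gamma>t k - \<gamma> (k - 1)))\<^sup>2 = \<beta>\<^sup>2 * (PP + 2 * PQ + QQ)"
    unfolding \<gamma>t_diff power2_norm_scaleR_add PP_def PQ_def QQ_def
    by (simp add: algebra_simps power2_eq_square)
  then have "st / \<beta> * (norm (\<gamma>t k - \<gamma> (k - 1)))\<^sup>2 = st * \<beta> * (PP + 2 * PQ + QQ)"
    using \<beta>_pos by (simp add: power2_eq_square)
  moreover have "qnorm2 G (xt k - x k) = qnorm2 G (xt k - x (k - 1) + matrix_inv G *v u k)"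
    unfolding step_x[OF assms(1)] by (simp add: algebra_simps)
  ultimately have "qnorm2 G (xt k - x k) \<le> st * \<beta> * (PP + 2 * PQ + QQ) + sh * qnorm2 G (xt k - x (k - 1))"
    using step_inexact[OF assms(1)] by simp
  moreover have "sh * qnorm2 G (xt k - x (k - 1)) \<le> \<sigma> * qnorm2 G (xt k - x (k - 1))"
    using assms(2) qnorm2_nonneg(1) by (rule mult_right_mono)
  moreover have "\<sigma> * Mnorm2 (zt_seq k - z_seq (k - 1)) = \<sigma> * qnorm2 G (xt k - x (k - 1))
      + \<sigma> * qnorm2 H (dy k) + \<sigma> * (\<beta> * (1 - \<tau>) * PP
        + \<beta> / (\<tau> + \<theta>) * ((1 - \<tau>)\<^sup>2 * PP + 2 * (1 - \<tau>) * PQ + QQ))"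
    unfolding Mnorm2_zt_minus_z_prev[OF assms(1)] PP_def PQ_def QQ_def by (simp only: distrib_left)
  ultimately show ?thesis
    using Mnorm2_zt_minus_z[OF assms(1)] phi_form_identity[OF parameter_bounds(3), of \<sigma> \<beta> PP PQ QQ st]
    unfolding PP_def[symmetric] PQ_def[symmetric] QQ_def[symmetric] by linarith
qed

lemma y_subgrad_monotone:
  assumes "2 \<le> k"
  shows "0 \<le> (1 + \<tau>) * \<beta> * inner (B *v dy k) (feas k) + \<tau> * \<beta> * (norm (B *v dy k))\<^sup>2
    - (1 - \<theta>) * \<beta> * inner (B *v dy k) (feas (k - 1)) - qnorm2 H (dy k) + inner (H *v dy (k - 1)) (dy k)"
proof -
  obtain j where k: "k = Suc j" and j: "1 \<le> j" using assms by (cases k) auto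
  have \<gamma>h_diff: "\<gamma>h k - \<gamma>h j = - (\<tau> * \<beta>) *\<^sub>R (B *v dy k + feas k) - (\<theta> * \<beta>) *\<^sub>R feas j"
    using multiplier_steps(2)[of k] multiplier_steps(2,3)[OF j] unfolding k
    by (simp add: algebra_simps scaleR_add_left)
  have subgrad_diff: "y_subgrad k - y_subgrad j = transpose B *v (- (\<tau> * \<beta>) *\<^sub>R (B *v dy k + feas k)
      - (\<theta> * \<beta>) *\<^sub>R feas j) - \<beta> *\<^sub>R (transpose B *v (feas k - feas j)) + (H *v dy k - H *v dy j)"
    unfolding y_subgrad_def \<gamma>h_diff[symmetric] by (simp add: matrix_vector_mult_diff_distrib algebra_simps)
  have y_diff: "y k - y j = - dy k" unfolding dy_def k by simp
  have "inner (y_subgrad k - y_subgrad j) (y k - y j)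
      = - inner (- (\<tau> * \<beta>) *\<^sub>R (B *v dy k + feas k) - (\<theta> * \<beta>) *\<^sub>R feas j) (B *v dy k)
        + \<beta> * inner (feas k - feas j) (B *v dy k) - inner (H *v dy k) (dy k) + inner (H *v dy j) (dy k)"
    unfolding subgrad_diff y_diff by (simp add: inner_add_left inner_diff_left inner_transpose_mult)
  also have "\<dots> = (1 + \<tau>) * \<beta> * inner (B *v dy k) (feas k) + \<tau> * \<beta> * (norm (B *v dy k))\<^sup>2
        - (1 - \<theta>) * \<beta> * inner (B *v dy k) (feas j) - qnorm2 H (dy k) + inner (H *v dy j) (dy k)"
    unfolding qnorm2_def power2_norm_eq_inner
    by (simp add: inner_add_left inner_diff_left inner_commute[of "feas k" "B *v dy k"]
        inner_commute[of "feas j" "B *v dy k"] algebra_simps)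
  finally have "inner (y_subgrad k - y_subgrad j) (y k - y j) = \<dots>" .
  moreover have "0 \<le> inner (y_subgrad k - y_subgrad j) (y k - y j)"
    using subdiff_monotone[OF g_proper y_subgrad_in_subdiff y_subgrad_in_subdiff] j unfolding k by simp
  ultimately show ?thesis unfolding k by simp
qed

lemma distance_sum_lower_bound:
  assumes "1 \<le> k"
  shows "\<beta> * ((1 - \<tau>) * (norm (B *v dy k))\<^sup>2 + (\<tau> + \<theta>) * (norm (feas k))\<^sup>2) / 2
    \<le> Mnorm2 (zs - z_seq (k - 1)) + Mnorm2 (zs - z_seq k)"
proof -
  obtain xs ys gs where zs: "zs = (xs, ys, gs)" by (cases zs)
  define Y W where "Y i = B *v (ys - y i)" and "W i = gs - \<gamma> i - (\<tau> * \<beta>) *\<^sub>R Y i" for i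
  have lower: "\<beta> * (1 - \<tau>) * (norm (Y i))\<^sup>2 + (norm (W i))\<^sup>2 / ((\<tau> + \<theta>) * \<beta>) \<le> Mnorm2 (zs - z_seq i)"
    for i
    using Mnorm2_lower_bound[of "ys - y i" "gs - \<gamma> i" "xs - x i"] unfolding zs z_seq_def Y_def W_def
    by simp
  have Y: "Y k = Y (k - 1) + B *v dy k"
    unfolding Y_def dy_def by (simp add: matrix_vector_mult_diff_distrib)
  have "\<gamma> k = \<gamma> (k - 1) - (\<tau> * \<beta>) *\<^sub>R (B *v dy k) - ((\<tau> + \<theta>) * \<beta>) *\<^sub>R feas k"
    using multiplier_steps(3)[OF assms] by (simp add: algebra_simps)
  then have W: "W k = W (k - 1) + ((\<tau> + \<theta>) * \<beta>) *\<^sub>R feas k"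
    unfolding W_def Y by (simp add: algebra_simps)
  have "\<beta> * (1 - \<tau>) * ((norm (B *v dy k))\<^sup>2 / 2) \<le> \<beta> * (1 - \<tau>) * ((norm (Y (k - 1)))\<^sup>2 + (norm (Y k))\<^sup>2)"
    unfolding Y using parameter_bounds st_nonneg \<beta>_pos
    by (intro mult_left_mono power2_norm_le_sum) auto
  moreover have "(norm (((\<tau> + \<theta>) * \<beta>) *\<^sub>R feas k))\<^sup>2 / 2 / ((\<tau> + \<theta>) * \<beta>)
      \<le> ((norm (W (k - 1)))\<^sup>2 + (norm (W k))\<^sup>2) / ((\<tau> + \<theta>) * \<beta>)"
    unfolding W using parameter_bounds \<beta>_pos by (intro divide_right_mono power2_norm_le_sum) auto
  moreover have "(norm (((\<tau> + \<theta>) * \<beta>) *\<^sub>R feas k))\<^sup>2 / 2 / ((\<tau> + \<theta>) * \<beta>)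
      = \<beta> * (\<tau> + \<theta>) * (norm (feas k))\<^sup>2 / 2"
  proof -
    have "(norm (c *\<^sub>R a))\<^sup>2 / 2 / c = c * (norm a)\<^sup>2 / 2" if "c \<noteq> 0" for c :: real and a :: "real^'m"
      using that by (simp add: power_mult_distrib field_simps power2_eq_square)
    then show ?thesis using parameter_nonzero by (simp add: mult.commute)
  qed
  moreover have "((norm (W (k - 1)))\<^sup>2 + (norm (W k))\<^sup>2) / ((\<tau> + \<theta>) * \<beta>)
      = (norm (W (k - 1)))\<^sup>2 / ((\<tau> + \<theta>) * \<beta>) + (norm (W k))\<^sup>2 / ((\<tau> + \<theta>) * \<beta>)"
    by (rule add_divide_distrib)
  moreover have "\<beta> * ((1 - \<tau>) * (norm (B *v dy k))\<^sup>2 + (\<tau> + \<theta>) * (norm (feas k))\<^sup>2) / 2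
      = \<beta> * (1 - \<tau>) * ((norm (B *v dy k))\<^sup>2 / 2) + \<beta> * (\<tau> + \<theta>) * (norm (feas k))\<^sup>2 / 2"
    by (simp add: field_simps)
  moreover have "\<beta> * (1 - \<tau>) * ((norm (Y (k - 1)))\<^sup>2 + (norm (Y k))\<^sup>2)
      = \<beta> * (1 - \<tau>) * (norm (Y (k - 1)))\<^sup>2 + \<beta> * (1 - \<tau>) * (norm (Y k))\<^sup>2"
    by (simp add: algebra_simps)
  ultimately show ?thesis using lower[of k] lower[of "k - 1"] by linarith
qed

end

section \<open>Complexity bound\<close>

locale inexact_sym_prox_admm_rate = inexact_sym_prox_admm +
  fixes \<sigma> :: real
  assumes \<sigma>_range: "sh \<le> \<sigma>" "\<sigma> < 1"
    and phi_nonneg: "0 \<le> phi st \<tau> \<theta> \<sigma>" and phi_hat_nonneg: "0 \<le> phi_hat st \<tau> \<theta> \<sigma>"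
    and phi_tilde_pos: "0 < phi_tilde st \<tau> \<theta> \<sigma>" and phi_bar_nonneg: "0 \<le> phi_bar st \<tau> \<theta> \<sigma>"
begin

definition \<eta> :: "nat \<Rightarrow> real" where
  "\<eta> k = \<beta> / (\<tau> + \<theta>) * phi_tilde st \<tau> \<theta> \<sigma> * (norm (feas k))\<^sup>2
    + phi st \<tau> \<theta> \<sigma> / ((\<tau> + \<theta>) * (1 + \<tau>)) * qnorm2 H (dy k)"

definition first_step_weight :: real where
  "first_step_weight = 4 * (1 + \<tau> + vartheta st \<tau> \<theta>) * phi st \<tau> \<theta> \<sigma>
    / ((\<tau> + \<theta>) * (1 + \<tau>) * vartheta st \<tau> \<theta>)"

lemma \<sigma>_nonneg: "0 \<le> \<sigma>"
  using sh_nonneg \<sigma>_range by simp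

lemma \<eta>_nonneg: "0 \<le> \<eta> k"
  unfolding \<eta>_def using parameter_bounds \<beta>_pos phi_tilde_pos phi_nonneg qnorm2_nonneg(2)
  by (intro add_nonneg_nonneg mult_nonneg_nonneg divide_nonneg_pos) auto

lemma first_step_weight_nonneg: "0 \<le> first_step_weight"
  unfolding first_step_weight_def using parameter_bounds phi_nonneg vartheta_pos[OF region st_nonneg]
  by simp

lemma later_step_error_bound:
  assumes "2 \<le> k"
  shows "Mnorm2 (zt_seq k - z_seq k) \<le> \<sigma> * Mnorm2 (zt_seq k - z_seq (k - 1)) + \<eta> (k - 1) - \<eta> k"
proof -
  define \<phi> \<phi>t where "\<phi> = phi st \<tau> \<theta> \<sigma>" and "\<phi>t = phi_tilde st \<tau> \<theta> \<sigma>"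
  have "2 * inner (H *v dy (k - 1)) (dy k) \<le> qnorm2 H (dy k) + qnorm2 H (dy (k - 1))"
    using Hop.form_diff[of "dy (k - 1)" "dy k"] Hop.nonneg[of "dy (k - 1) - dy k"]
    unfolding qnorm2_def by linarith
  moreover have "0 \<le> ((1 - \<theta>) * \<phi> / (1 + \<tau>))\<^sup>2 * (norm (B *v dy k))\<^sup>2
      + 2 * ((1 - \<theta>) * \<phi> / (1 + \<tau>)) * \<phi>t * inner (B *v dy k) (feas (k - 1))
      + \<phi>t\<^sup>2 * (norm (feas (k - 1)))\<^sup>2"
    using zero_le_power2[of "norm (((1 - \<theta>) * \<phi> / (1 + \<tau>)) *\<^sub>R (B *v dy k) + \<phi>t *\<^sub>R feas (k - 1))"]
    unfolding power2_norm_scaleR_add .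
  moreover have "0 \<le> ((1 + \<tau>) * phi_hat st \<tau> \<theta> \<sigma> - 2 * \<tau> * \<phi>) * (1 + \<tau>) * \<phi>t - (1 - \<theta>)\<^sup>2 * \<phi>\<^sup>2"
    using phi_bar_nonneg unfolding phi_bar_def \<phi>_def \<phi>t_def .
  ultimately have "\<eta> k - \<eta> (k - 1) \<le> \<beta> / (\<tau> + \<theta>) * (phi_hat st \<tau> \<theta> \<sigma> * (norm (B *v dy k))\<^sup>2
      + 2 * \<phi> * inner (B *v dy k) (feas k) + \<phi>t * (norm (feas k))\<^sup>2) + \<sigma> * qnorm2 H (dy k)"
    using phi_form_lower_bound[OF \<beta>_pos parameter_bounds(3) _ phi_nonneg phi_tilde_pos \<sigma>_nonneg
        zero_le_power2 qnorm2_nonneg(2) _ y_subgrad_monotone[OF assms]] parameter_bounds(1)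
    unfolding \<eta>_def \<phi>_def \<phi>t_def by simp
  then show ?thesis
    using inexact_error_bound[of k \<sigma>] assms \<sigma>_range unfolding \<phi>_def \<phi>t_def by simp
qed

lemma first_step_cross_term_bound:
  assumes kkt: "zs \<in> kkt_set f g A B b"
  shows "- 2 * \<beta> * (1 + \<tau>) * inner (B *v dy 1) (feas 1) + qnorm2 H (dy 1)
    \<le> 4 * (1 + \<tau> + vartheta st \<tau> \<theta>) / vartheta st \<tau> \<theta> * Mnorm2 (zs - z_seq 0)"
proof -
  define d PP PQ QQ HH where "d = Mnorm2 (zs - z_seq 0)" and "PP = (norm (B *v dy 1))\<^sup>2"
    and "PQ = inner (B *v dy 1) (feas 1)" and "QQ = (norm (feas 1))\<^sup>2" and "HH = qnorm2 H (dy 1)"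
  have "Mnorm2 (zt_seq 1 - z_seq 1) \<le> Mnorm2 (zt_seq 1 - z_seq 0)
      - (\<beta> * (1 - \<tau> - st) * (PP + 2 * PQ + QQ) + \<beta> * (1 - \<theta>) * QQ) - HH"
    using inexact_error_bound[of 1 1] sh_nonneg \<sigma>_range phi_form_at_one[OF parameter_bounds(3)]
    unfolding PP_def PQ_def QQ_def HH_def by simp
  then have "Mnorm2 (zs - z_seq 1) + HH + \<beta> * (1 - \<tau> - st) * (PP + 2 * PQ + QQ) + \<beta> * (1 - \<theta>) * QQ \<le> d"
    using kkt_distance_step[OF kkt, of 1] unfolding d_def by simp
  moreover have "\<beta> * ((1 - \<tau>) * PP + (\<tau> + \<theta>) * QQ) / 2 \<le> d + Mnorm2 (zs - z_seq 1)"
    using distance_sum_lower_bound[of 1 zs] unfolding d_def PP_def QQ_def by simp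
  moreover have "PQ\<^sup>2 \<le> PP * QQ"
    unfolding PP_def PQ_def QQ_def power2_norm_eq_inner by (rule Cauchy_Schwarz_ineq)
  ultimately show ?thesis
    unfolding d_def[symmetric] PQ_def[symmetric] HH_def[symmetric]
    using \<beta>_pos parameter_bounds st_nonneg vartheta_pos[OF region st_nonneg] qnorm2_nonneg(2)
    by (intro first_step_scalar_bound) (auto simp: PP_def QQ_def HH_def)
qed

lemma first_step_error_bound:
  assumes kkt: "zs \<in> kkt_set f g A B b"
  shows "Mnorm2 (zt_seq 1 - z_seq 1)
    \<le> \<sigma> * Mnorm2 (zt_seq 1 - z_seq 0) + first_step_weight * Mnorm2 (zs - z_seq 0) - \<eta> 1"
proof -
  define d PQ HH \<phi> \<kappa> where "d = Mnorm2 (zs - z_seq 0)" and "PQ = inner (B *v dy 1) (feas 1)"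
    and "HH = qnorm2 H (dy 1)" and "\<phi> = phi st \<tau> \<theta> \<sigma>"
    and "\<kappa> = 4 * (1 + \<tau> + vartheta st \<tau> \<theta>) / vartheta st \<tau> \<theta>"
  have "\<phi> / ((\<tau> + \<theta>) * (1 + \<tau>)) * (- 2 * \<beta> * (1 + \<tau>) * PQ + HH)
      \<le> \<phi> / ((\<tau> + \<theta>) * (1 + \<tau>)) * (\<kappa> * d)"
    using first_step_cross_term_bound[OF kkt] parameter_bounds phi_nonneg
    unfolding d_def PQ_def HH_def \<phi>_def \<kappa>_def by (intro mult_left_mono) auto
  moreover have "\<phi> / ((\<tau> + \<theta>) * (1 + \<tau>)) * (- 2 * \<beta> * (1 + \<tau>) * PQ + HH)
      = - (\<beta> / (\<tau> + \<theta>) * (2 * \<phi> * PQ)) + \<phi> / ((\<tau> + \<theta>) * (1 + \<tau>)) * HH"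
    "\<phi> / ((\<tau> + \<theta>) * (1 + \<tau>)) * (\<kappa> * d) = first_step_weight * d"
  proof -
    have "c / (s * w) * (- 2 * \<beta> * w * PQ + HH) = - (\<beta> / s * (2 * c * PQ)) + c / (s * w) * HH"
      "c / (s * w) * (4 * (w + t) / t * d) = 4 * (w + t) * c / (s * w * t) * d"
      if "s \<noteq> 0" "w \<noteq> 0" "t \<noteq> 0" for s w t c :: real
      using that by (simp_all add: field_simps)
    moreover have "\<tau> + \<theta> \<noteq> 0" "1 + \<tau> \<noteq> 0" "vartheta st \<tau> \<theta> \<noteq> 0"
      using parameter_bounds vartheta_pos[OF region st_nonneg] by auto
    ultimately show "\<phi> / ((\<tau> + \<theta>) * (1 + \<tau>)) * (- 2 * \<beta> * (1 + \<tau>) * PQ + HH)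
        = - (\<beta> / (\<tau> + \<theta>) * (2 * \<phi> * PQ)) + \<phi> / ((\<tau> + \<theta>) * (1 + \<tau>)) * HH"
      "\<phi> / ((\<tau> + \<theta>) * (1 + \<tau>)) * (\<kappa> * d) = first_step_weight * d"
      unfolding first_step_weight_def \<phi>_def \<kappa>_def by (simp_all add: add.assoc)
  qed
  moreover have "0 \<le> \<beta> / (\<tau> + \<theta>) * (phi_hat st \<tau> \<theta> \<sigma> * (norm (B *v dy 1))\<^sup>2)" "0 \<le> \<sigma> * HH"
    using \<beta>_pos parameter_bounds phi_hat_nonneg \<sigma>_nonneg qnorm2_nonneg(2) unfolding HH_def by simp_all
  moreover have "\<beta> / (\<tau> + \<theta>) * (phi_hat st \<tau> \<theta> \<sigma> * (norm (B *v dy 1))\<^sup>2 + 2 * \<phi> * PQ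
        + phi_tilde st \<tau> \<theta> \<sigma> * (norm (feas 1))\<^sup>2)
      = \<beta> / (\<tau> + \<theta>) * (phi_hat st \<tau> \<theta> \<sigma> * (norm (B *v dy 1))\<^sup>2) + \<beta> / (\<tau> + \<theta>) * (2 * \<phi> * PQ)
        + \<beta> / (\<tau> + \<theta>) * phi_tilde st \<tau> \<theta> \<sigma> * (norm (feas 1))\<^sup>2"
    by (simp add: algebra_simps)
  ultimately show ?thesis
    using inexact_error_bound[of 1 \<sigma>] \<sigma>_range unfolding \<eta>_def d_def PQ_def HH_def \<phi>_def by simp
qed

lemma step_sum_bound:
  assumes kkt: "zs \<in> kkt_set f g A B b"
  shows "(\<Sum>i=1..k. Mnorm2 (z_seq (i - 1) - z_seq i)) \<le> 2 * C1_const st \<tau> \<theta> \<sigma> * Mnorm2 (zs - z_seq 0)"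
proof -
  define d where "d = Mnorm2 (zs - z_seq 0)"
  define \<eta>' where "\<eta>' i = (if i = 0 then first_step_weight * d else \<eta> i)" for i
  have "(\<Sum>i=1..k. Mnorm2 (z_seq (i - 1) - z_seq i)) \<le> 2 * (1 + \<sigma>) * (d + \<eta>' 0) / (1 - \<sigma>) + 2 * \<eta>' 0"
  proof (rule hpe_telescoping_bound[where \<Delta> = "\<lambda>i. Mnorm2 (zs - z_seq i)", unfolded d_def[symmetric]])
    show "Mnorm2 (zs - z_seq i) \<le> Mnorm2 (zs - z_seq (i - 1)) + Mnorm2 (zt_seq i - z_seq i)
        - Mnorm2 (zt_seq i - z_seq (i - 1))" if "1 \<le> i" for i
      by (rule kkt_distance_step[OF kkt that])
    show "Mnorm2 (zt_seq i - z_seq i) \<le> \<sigma> * Mnorm2 (zt_seq i - z_seq (i - 1)) + \<eta>' (i - 1) - \<eta>' i"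
      if "1 \<le> i" for i
    proof (cases "i = 1")
      case True
      then show ?thesis using first_step_error_bound[OF kkt] unfolding \<eta>'_def d_def by simp
    next
      case False
      then show ?thesis using later_step_error_bound[of i] that unfolding \<eta>'_def by simp
    qed
    show "Mnorm2 (z_seq (i - 1) - z_seq i)
        \<le> 2 * Mnorm2 (zt_seq i - z_seq i) + 2 * Mnorm2 (zt_seq i - z_seq (i - 1))" for i
      using M.form_diff_le[of "zt_seq i - z_seq i" "zt_seq i - z_seq (i - 1)"] by simp
    show "0 \<le> Mnorm2 (zs - z_seq i)" for i by (rule M.nonneg)
    show "0 \<le> \<eta>' i" for i
      unfolding \<eta>'_def d_def using first_step_weight_nonneg \<eta>_nonneg M.nonneg by simp
  qed (use \<sigma>_nonneg \<sigma>_range in auto)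
  also have "\<dots> = 2 * C1_const st \<tau> \<theta> \<sigma> * d"
  proof -
    have C1: "C1_const st \<tau> \<theta> \<sigma> = (1 + \<sigma> + 2 * first_step_weight) / (1 - \<sigma>)"
      unfolding C1_const_def first_step_weight_def by (simp add: algebra_simps)
    show ?thesis unfolding C1 \<eta>'_def using \<sigma>_range by (simp add: field_simps)
  qed
  finally show ?thesis unfolding d_def .
qed

theorem pointwise_residual_bound:
  assumes kkt_ne: "kkt_set f g A B b \<noteq> {}" and "1 \<le> k"
  shows "\<exists>i. 1 \<le> i \<and> i \<le> k \<and> Max {norm (u i), norm (v i), norm (w i)}
    \<le> sqrt (2 * largest_eigenvalue M * d0_val f g A B b G H \<beta> \<tau> \<theta> (x 0, y 0, \<gamma> 0)
      * C1_const st \<tau> \<theta> \<sigma> / real k)"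
proof -
  define S C1 d0 L where "S = (\<Sum>i=1..k. Mnorm2 (z_seq (i - 1) - z_seq i))"
    and "C1 = C1_const st \<tau> \<theta> \<sigma>" and "d0 = d0_val f g A B b G H \<beta> \<tau> \<theta> (x 0, y 0, \<gamma> 0)"
    and "L = largest_eigenvalue M"
  have "0 < C1"
    unfolding C1_def C1_const_def using \<sigma>_range \<sigma>_nonneg phi_nonneg parameter_bounds
      vartheta_pos[OF region st_nonneg]
    by (intro divide_pos_pos add_pos_nonneg) auto
  have "S / (2 * C1) \<le> Mnorm2 (zs - z_seq 0)" if "zs \<in> kkt_set f g A B b" for zs
    using step_sum_bound[OF that, of k] \<open>0 < C1\<close> unfolding S_def C1_def
    by (simp add: pos_divide_le_eq mult.commute)
  then have "S / (2 * C1) \<le> d0"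
    unfolding d0_def d0_val_def by (intro cInf_greatest) (use kkt_ne in \<open>auto simp: z_seq_def\<close>)
  then have S_le: "S \<le> 2 * C1 * d0" using \<open>0 < C1\<close> by (simp add: pos_divide_le_eq mult.commute)
  obtain i where i: "1 \<le> i" "i \<le> k" and step: "Mnorm2 (z_seq (i - 1) - z_seq i) \<le> S / real k"
    using exists_le_average[OF \<open>1 \<le> k\<close>, of "\<lambda>i. Mnorm2 (z_seq (i - 1) - z_seq i)"]
    unfolding S_def by auto
  have "(norm (u i, v i, w i))\<^sup>2 \<le> L * Mnorm2 (z_seq (i - 1) - z_seq i)"
    unfolding L_def residual_eq_M[OF i(1)]
    by (rule norm_sq_le_largest_eigenvalue[OF M.psd_operator_axioms])
  also have "\<dots> \<le> L * (2 * C1 * d0 / real k)"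
    using step S_le \<open>1 \<le> k\<close> largest_eigenvalue_nonneg[OF M.psd_operator_axioms]
    unfolding L_def by (intro mult_left_mono order.trans[OF step] divide_right_mono) auto
  finally have "norm (u i, v i, w i) \<le> sqrt (2 * L * d0 * C1 / real k)"
    by (intro real_le_rsqrt) (simp add: algebra_simps)
  then show ?thesis
    using i Max_norm_le_norm_triple[of "u i" "v i" "w i"] unfolding L_def d0_def C1_def
    by (intro exI[of _ i]) auto
qed

end

theorem theorem2p10:
  fixes f :: "real^'n \<Rightarrow> ereal" and g :: "real^'p \<Rightarrow> ereal"
    and A :: "real^'n^'m" and B :: "real^'p^'m" and b :: "real^'m"
    and G :: "real^'n^'n" and H :: "real^'p^'p"
    and \<beta> st sh \<tau> \<theta> \<sigma> :: real
    and x :: "nat \<Rightarrow> real^'n" and y :: "nat \<Rightarrow> real^'p" and \<gamma> :: "nat \<Rightarrow> real^'m"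
    and xt :: "nat \<Rightarrow> real^'n" and u :: "nat \<Rightarrow> real^'n" and \<gamma>t :: "nat \<Rightarrow> real^'m"
    and \<gamma>h :: "nat \<Rightarrow> real^'m"
    and v :: "nat \<Rightarrow> real^'p" and w :: "nat \<Rightarrow> real^'m"
  assumes f_pcc: "proper_fun f" "convex_fun f" "closed_fun f"
    and g_pcc: "proper_fun g" "convex_fun g" "closed_fun g"
    and kkt_ne: "kkt_set f g A B b \<noteq> {}"
    and \<beta>_pos: "\<beta> > 0"
    and st: "0 \<le> st" "st < 1" and sh: "0 \<le> sh" "sh < 1"
    and G_pd: "pos_def G" and H_psd: "pos_semidef H"
    and region: "region_R st \<tau> \<theta>"
    and step_gt: "\<And>k. k \<ge> 1 \<Longrightarrow> \<gamma>t k = \<gamma> (k - 1) - \<beta> *\<^sub>R (A *v xt k + B *v y (k - 1) - b)"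
    and step_u: "\<And>k. k \<ge> 1 \<Longrightarrow> u k \<in> {s - transpose A *v \<gamma>t k | s. s \<in> subdiff f (xt k)}"
    and step_inexact: "\<And>k. k \<ge> 1 \<Longrightarrow>
        qnorm2 G (xt k - x (k - 1) + matrix_inv G *v u k)
          \<le> st / \<beta> * (norm (\<gamma>t k - \<gamma> (k - 1)))\<^sup>2 + sh * qnorm2 G (xt k - x (k - 1))"
    and step_gh: "\<And>k. k \<ge> 1 \<Longrightarrow> \<gamma>h k = \<gamma> (k - 1) - (\<tau> * \<beta>) *\<^sub>R (A *v xt k + B *v y (k - 1) - b)"
    and step_y: "\<And>k y'. k \<ge> 1 \<Longrightarrow>
        g (y k) + ereal (- inner (\<gamma>h k) (B *v y k) + \<beta> / 2 * (norm (A *v xt k + B *v y k - b))\<^sup>2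
                         + 1 / 2 * qnorm2 H (y k - y (k - 1)))
        \<le> g y' + ereal (- inner (\<gamma>h k) (B *v y') + \<beta> / 2 * (norm (A *v xt k + B *v y' - b))\<^sup>2
                         + 1 / 2 * qnorm2 H (y' - y (k - 1)))"
    and step_x: "\<And>k. k \<ge> 1 \<Longrightarrow> x k = x (k - 1) - matrix_inv G *v u k"
    and step_g: "\<And>k. k \<ge> 1 \<Longrightarrow> \<gamma> k = \<gamma>h k - (\<theta> * \<beta>) *\<^sub>R (A *v xt k + B *v y k - b)"
    and v_def: "\<And>k. k \<ge> 1 \<Longrightarrow> v k =
        (H + ((\<tau> - \<tau> * \<theta> + \<theta>) * \<beta> / (\<tau> + \<theta>)) *\<^sub>R (transpose B ** B)) *v (y (k - 1) - y k)
        - (\<tau> / (\<tau> + \<theta>)) *\<^sub>R (transpose B *v (\<gamma> (k - 1) - \<gamma> k))"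
    and w_def: "\<And>k. k \<ge> 1 \<Longrightarrow> w k =
        - (\<tau> / (\<tau> + \<theta>)) *\<^sub>R (B *v (y (k - 1) - y k)) + (1 / ((\<tau> + \<theta>) * \<beta>)) *\<^sub>R (\<gamma> (k - 1) - \<gamma> k)"
    and \<sigma>_range: "sh \<le> \<sigma>" "\<sigma> < 1"
    and \<sigma>_phi: "phi st \<tau> \<theta> \<sigma> \<ge> 0" "phi_hat st \<tau> \<theta> \<sigma> \<ge> 0"
        "phi_tilde st \<tau> \<theta> \<sigma> > 0" "phi_bar st \<tau> \<theta> \<sigma> \<ge> 0"
  shows "\<forall>k\<ge>1.
      u k \<in> {s - transpose A *v \<gamma>t k | s. s \<in> subdiff f (xt k)} \<and>
      v k \<in> {s - transpose B *v \<gamma>t k | s. s \<in> subdiff g (y k)} \<and>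
      w k = A *v xt k + B *v y k - b \<and>
      (\<exists>i. 1 \<le> i \<and> i \<le> k \<and>
         Max {norm (u i), norm (v i), norm (w i)}
           \<le> sqrt (2 * largest_eigenvalue (M_op G H B \<beta> \<tau> \<theta>)
                    * d0_val f g A B b G H \<beta> \<tau> \<theta> (x 0, y 0, \<gamma> 0)
                    * C1_const st \<tau> \<theta> \<sigma> / real k))"
proof -
  interpret inexact_sym_prox_admm_rate f g A B b G H \<beta> st sh \<tau> \<theta> x y \<gamma> xt u \<gamma>t \<gamma>h v w \<sigma>
    by (unfold_locales; fact assms)
  show ?thesis
    using residual_inclusions pointwise_residual_bound[OF kkt_ne] by blast
qed

end
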